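(* For every positive integer $t$, $M(t)=SM(t)$ and $OM(t)\leq M(t)\leq OM(2t)$.
   Context: A signed graph $(G,\sigma)$ is a graph (loops and parallel edges allowed) with a signature $\sigma:E(G)\to\{+,-\}$. Switching at a vertex multiplies the signs of all incident edges by $-$. A signed graph $(H,\pi)$ is a minor of $(G,\sigma)$ if it is obtained by a sequence of vertex deletions, edge deletions, contractions of positive edges, and switchings. A signed graph is balanced if it has no negative cycle (sign of a cycle = product of its edge signs); a vertex set is balanced if it induces a balanced subgraph. A balanced $k$-coloring is a partition (or cover) of the vertex set into $k$ balanced sets, and the balanced chromatic number $\chi_b(\hat G)$ is the minimum such $k$ (finite iff $\hat G$ has no negative loop). For a graph $G$, $\tilde G$ denotes the signed graph obtained by replacing every edge with a positive and a negative parallel edge, and $(G,-)$ denotes $G$ with all edges negative. $M(t)$ is the largest $k$ such that every graph of chromatic number at least $t$ contains $K_k$ as a minor. $SM(t)$ is the largest $k$ such that every signed graph with no negative loop and $\chi_b\geq t$ contains $\tilde K_k$ as a minor. $OM(t)$ is the largest $k$ such that for every graph $G$ with $\chi(G)\geq t$, the signed graph $(G,-)$ contains $(K_k,-)$ as a minor. *)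

theory Defs
  imports Main
begin

text \<open>A multigraph: vertex set, edge set, and for each edge the set of its ends
(one end for a loop, two ends otherwise).  A signed graph additionally has a
signature; sign e = True means e is positive, False means negative.\<close>

record ('v,'e) mgraph =
  verts :: "'v set"
  edges :: "'e set"
  ends  :: "'e \<Rightarrow> 'v set"

record ('v,'e) sgraph = "('v,'e) mgraph" +
  sign :: "'e \<Rightarrow> bool"

definition wf_graph :: "('v,'e,'x) mgraph_scheme \<Rightarrow> bool" where
  "wf_graph G \<longleftrightarrow> finite (verts G) \<and> finite (edges G) \<and>
     (\<forall>e\<in>edges G. ends G e \<subseteq> verts G \<and> card (ends G e) \<in> {1,2})"

definition is_loop :: "('v,'e,'x) mgraph_scheme \<Rightarrow> 'e \<Rightarrow> bool" where
  "is_loop G e \<longleftrightarrow> card (ends G e) = 1"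

definition loopless :: "('v,'e,'x) mgraph_scheme \<Rightarrow> bool" where
  "loopless G \<longleftrightarrow> (\<forall>e\<in>edges G. \<not> is_loop G e)"

definition neg_loop :: "('v,'e,'x) sgraph_scheme \<Rightarrow> bool" where
  "neg_loop G \<longleftrightarrow> (\<exists>e\<in>edges G. is_loop G e \<and> \<not> sign G e)"

definition del_vertex :: "('v,'e,'x) mgraph_scheme \<Rightarrow> 'v \<Rightarrow> ('v,'e,'x) mgraph_scheme" where
  "del_vertex G v = G\<lparr>verts := verts G - {v}, edges := {e \<in> edges G. v \<notin> ends G e}\<rparr>"

definition del_edge :: "('v,'e,'x) mgraph_scheme \<Rightarrow> 'e \<Rightarrow> ('v,'e,'x) mgraph_scheme" where
  "del_edge G e = G\<lparr>edges := edges G - {e}\<rparr>"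

definition contract :: "('v,'e,'x) mgraph_scheme \<Rightarrow> 'e \<Rightarrow> 'v \<Rightarrow> 'v \<Rightarrow> ('v,'e,'x) mgraph_scheme" where
  "contract G e u w = G\<lparr>verts := verts G - {w}, edges := edges G - {e},
      ends := (\<lambda>f. (\<lambda>x. if x = w then u else x) ` ends G f)\<rparr>"

text \<open>Switching at v negates the sign of every non-loop edge incident with v
(a loop is incident twice with its vertex, so its sign is unchanged).\<close>
definition switch :: "('v,'e,'x) sgraph_scheme \<Rightarrow> 'v \<Rightarrow> ('v,'e,'x) sgraph_scheme" where
  "switch G v = G\<lparr>sign := (\<lambda>f. if v \<in> ends G f \<and> \<not> is_loop G f then \<not> sign G f else sign G f)\<rparr>"

inductive minor_step :: "('v,'e) mgraph \<Rightarrow> ('v,'e) mgraph \<Rightarrow> bool" where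
  "v \<in> verts G \<Longrightarrow> minor_step (del_vertex G v) G"
| "e \<in> edges G \<Longrightarrow> minor_step (del_edge G e) G"
| "e \<in> edges G \<Longrightarrow> ends G e = {u, w} \<Longrightarrow> u \<noteq> w \<Longrightarrow> minor_step (contract G e u w) G"

definition is_minor :: "('v,'e) mgraph \<Rightarrow> ('v,'e) mgraph \<Rightarrow> bool" where
  "is_minor H G \<longleftrightarrow> minor_step\<^sup>*\<^sup>* H G"

inductive sminor_step :: "('v,'e) sgraph \<Rightarrow> ('v,'e) sgraph \<Rightarrow> bool" where
  "v \<in> verts G \<Longrightarrow> sminor_step (del_vertex G v) G"
| "e \<in> edges G \<Longrightarrow> sminor_step (del_edge G e) G"
| "e \<in> edges G \<Longrightarrow> sign G e \<Longrightarrow> ends G e = {u, w} \<Longrightarrow> u \<noteq> w \<Longrightarrow>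
     sminor_step (contract G e u w) G"
| "v \<in> verts G \<Longrightarrow> sminor_step (switch G v) G"

definition is_sminor :: "('v,'e) sgraph \<Rightarrow> ('v,'e) sgraph \<Rightarrow> bool" where
  "is_sminor H G \<longleftrightarrow> sminor_step\<^sup>*\<^sup>* H G"

text \<open>A cycle of length n \<ge> 1: distinct vertices vs!0,...,vs!(n-1) and distinct edges
es!i joining vs!i and vs!((i+1) mod n) (n = 1: a loop; n = 2: two parallel edges).\<close>
definition is_cycle :: "('v,'e,'x) mgraph_scheme \<Rightarrow> 'v list \<Rightarrow> 'e list \<Rightarrow> bool" where
  "is_cycle G vs es \<longleftrightarrow> vs \<noteq> [] \<and> length es = length vs \<and> distinct vs \<and> distinct es \<and>
     set es \<subseteq> edges G \<and>
     (\<forall>i<length es. ends G (es ! i) = {vs ! i, vs ! ((i + 1) mod length vs)})"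

definition negative_cycle :: "('v,'e,'x) sgraph_scheme \<Rightarrow> 'v list \<Rightarrow> 'e list \<Rightarrow> bool" where
  "negative_cycle G vs es \<longleftrightarrow> is_cycle G vs es \<and> odd (length (filter (\<lambda>e. \<not> sign G e) es))"

definition balanced_set :: "('v,'e,'x) sgraph_scheme \<Rightarrow> 'v set \<Rightarrow> bool" where
  "balanced_set G S \<longleftrightarrow> \<not> (\<exists>vs es. negative_cycle G vs es \<and> set vs \<subseteq> S)"

definition balanced_colorable :: "('v,'e,'x) sgraph_scheme \<Rightarrow> nat \<Rightarrow> bool" where
  "balanced_colorable G k \<longleftrightarrow> (\<exists>c :: 'v \<Rightarrow> nat. (\<forall>v\<in>verts G. c v < k) \<and>
      (\<forall>i<k. balanced_set G {v \<in> verts G. c v = i}))"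

definition chi_b :: "('v,'e,'x) sgraph_scheme \<Rightarrow> nat" where
  "chi_b G = (LEAST k. balanced_colorable G k)"

definition colorable :: "('v,'e,'x) mgraph_scheme \<Rightarrow> nat \<Rightarrow> bool" where
  "colorable G k \<longleftrightarrow> (\<exists>c :: 'v \<Rightarrow> nat. (\<forall>v\<in>verts G. c v < k) \<and>
      (\<forall>e\<in>edges G. \<forall>u\<in>ends G e. \<forall>w\<in>ends G e. u \<noteq> w \<longrightarrow> c u \<noteq> c w))"

definition chi :: "('v,'e,'x) mgraph_scheme \<Rightarrow> nat" where
  "chi G = (LEAST k. colorable G k)"

definition is_K :: "('v,'e,'x) mgraph_scheme \<Rightarrow> nat \<Rightarrow> bool" where
  "is_K G k \<longleftrightarrow> wf_graph G \<and> loopless G \<and> card (verts G) = k \<and>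
     (\<forall>u\<in>verts G. \<forall>w\<in>verts G. u \<noteq> w \<longrightarrow> card {e \<in> edges G. ends G e = {u, w}} = 1)"

definition is_tildeK :: "('v,'e,'x) sgraph_scheme \<Rightarrow> nat \<Rightarrow> bool" where
  "is_tildeK G k \<longleftrightarrow> wf_graph G \<and> loopless G \<and> card (verts G) = k \<and>
     (\<forall>u\<in>verts G. \<forall>w\<in>verts G. u \<noteq> w \<longrightarrow>
        card {e \<in> edges G. ends G e = {u, w} \<and> sign G e} = 1 \<and>
        card {e \<in> edges G. ends G e = {u, w} \<and> \<not> sign G e} = 1)"

definition is_negK :: "('v,'e,'x) sgraph_scheme \<Rightarrow> nat \<Rightarrow> bool" where
  "is_negK G k \<longleftrightarrow> is_K G k \<and> (\<forall>e\<in>edges G. \<not> sign G e)"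

definition neg_of :: "('v,'e) mgraph \<Rightarrow> ('v,'e) sgraph" where
  "neg_of G = \<lparr>verts = verts G, edges = edges G, ends = ends G, sign = (\<lambda>_. False)\<rparr>"

text \<open>Graphs are finite; every finite (signed) multigraph is isomorphic to one with
vertices and edges labelled by natural numbers, so we quantify over those.\<close>

type_synonym graph = "(nat, nat) mgraph"
type_synonym sgraph_nat = "(nat, nat) sgraph"

definition M :: "nat \<Rightarrow> nat" where
  "M t = (GREATEST k. \<forall>G :: graph. wf_graph G \<and> loopless G \<and> chi G \<ge> t \<longrightarrow>
            (\<exists>H. is_minor H G \<and> is_K H k))"

definition SM :: "nat \<Rightarrow> nat" where
  "SM t = (GREATEST k. \<forall>G :: sgraph_nat. wf_graph G \<and> \<not> neg_loop G \<and> chi_b G \<ge> t \<longrightarrow>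
            (\<exists>H. is_sminor H G \<and> is_tildeK H k))"

definition OM :: "nat \<Rightarrow> nat" where
  "OM t = (GREATEST k. \<forall>G :: graph. wf_graph G \<and> loopless G \<and> chi G \<ge> t \<longrightarrow>
            (\<exists>H. is_sminor H (neg_of G) \<and> is_negK H k))"

end

theory Submission
  imports Defs
begin

text \<open>
  Doubling every edge of a loopless graph G into a positive and a negative edge gives a signed
  graph tilde G whose balanced sets are the independent sets of G, so chi_b (tilde G) = chi G,
  and a tilde-K_k minor of tilde G yields a clique model, hence a K_k minor, of G. This gives
  SM t <= M t; OM t <= M t is immediate by forgetting signs.

  Conversely, let S be a signed graph without negative loops. Take a coarsest partition of S into
  connected parts together with a switching s that makes every edge inside a part positive. By
  maximality, any two adjacent parts are joined, after switching, by edges of both signs, so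
  contracting the parts gives a graph H each of whose K_k minors lifts to a tilde-K_k minor of S.
  A proper colouring c of H yields the balanced colouring c o p of S, whence chi_b S <= chi H and
  M t <= SM t. For S = (G,-) the edges inside a part are negative, so s separates their ends and
  (c o p, s) properly colours G with 2 chi H colours; hence M t <= OM (2 t).
\<close>

definition underlying :: "('v,'e) sgraph \<Rightarrow> ('v,'e) mgraph" where
  "underlying S = \<lparr>verts = verts S, edges = edges S, ends = ends S\<rparr>"

definition pos_of :: "('v,'e) mgraph \<Rightarrow> ('v,'e) sgraph" where
  "pos_of G = \<lparr>verts = verts G, edges = edges G, ends = ends G, sign = (\<lambda>_. True)\<rparr>"

lemma underlying_simps [simp]:
  "verts (underlying S) = verts S" "edges (underlying S) = edges S" "ends (underlying S) = ends S"
  by (simp_all add: underlying_def)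

lemma pos_of_simps [simp]:
  "verts (pos_of G) = verts G" "edges (pos_of G) = edges G" "ends (pos_of G) = ends G"
  "sign (pos_of G) = (\<lambda>_. True)"
  by (simp_all add: pos_of_def)

lemma neg_of_simps [simp]:
  "verts (neg_of G) = verts G" "edges (neg_of G) = edges G" "ends (neg_of G) = ends G"
  "sign (neg_of G) = (\<lambda>_. False)"
  by (simp_all add: neg_of_def)

lemma underlying_pos_of [simp]: "underlying (pos_of G) = G"
  by (simp add: underlying_def)

lemma underlying_neg_of [simp]: "underlying (neg_of G) = G"
  by (simp add: underlying_def)

lemma del_vertex_simps [simp]:
  "verts (del_vertex G v) = verts G - {v}"
  "edges (del_vertex G v) = {e \<in> edges G. v \<notin> ends G e}"
  "ends (del_vertex G v) = ends G"
  "sign (del_vertex S v) = sign S"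
  by (simp_all add: del_vertex_def)

lemma del_edge_simps [simp]:
  "verts (del_edge G e) = verts G" "edges (del_edge G e) = edges G - {e}"
  "ends (del_edge G e) = ends G" "sign (del_edge S e) = sign S"
  by (simp_all add: del_edge_def)

lemma contract_simps [simp]:
  "verts (contract G e u w) = verts G - {w}"
  "edges (contract G e u w) = edges G - {e}"
  "ends (contract G e u w) = (\<lambda>f. (\<lambda>x. if x = w then u else x) ` ends G f)"
  "sign (contract S e u w) = sign S"
  by (simp_all add: contract_def)

lemma switch_simps [simp]:
  "verts (switch S v) = verts S" "edges (switch S v) = edges S" "ends (switch S v) = ends S"
  "sign (switch S v) = (\<lambda>f. if v \<in> ends S f \<and> \<not> is_loop S f then \<not> sign S f else sign S f)"
  by (simp_all add: switch_def)

lemma wf_graph_underlying [simp]: "wf_graph (underlying S) = wf_graph S"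
  by (simp add: wf_graph_def)

lemma wf_graph_neg_of [simp]: "wf_graph (neg_of G) = wf_graph G"
  by (simp add: wf_graph_def)

lemma wf_graph_pos_of [simp]: "wf_graph (pos_of G) = wf_graph G"
  by (simp add: wf_graph_def)

lemma is_K_underlying [simp]: "is_K (underlying S) k = is_K S k"
  by (simp add: is_K_def wf_graph_def loopless_def is_loop_def)

lemma ends_subset_verts: "wf_graph G \<Longrightarrow> e \<in> edges G \<Longrightarrow> ends G e \<subseteq> verts G"
  by (simp add: wf_graph_def)

lemma card_ends: "wf_graph G \<Longrightarrow> e \<in> edges G \<Longrightarrow> card (ends G e) \<in> {1, 2}"
  by (simp add: wf_graph_def)

lemma obtain_ends:
  assumes "wf_graph G" "e \<in> edges G"
  obtains a b where "ends G e = {a, b}"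
  using card_ends[OF assms] by (auto simp: card_Suc_eq numeral_2_eq_2)

lemma ends_eq_doubleton:
  assumes "wf_graph G" "e \<in> edges G" "a \<in> ends G e" "b \<in> ends G e" "a \<noteq> b"
  shows "ends G e = {a, b}"
proof -
  have "finite (ends G e)" "card (ends G e) \<le> card {a, b}"
    using card_ends[OF assms(1,2)] assms(5) by (auto intro: card_ge_0_finite)
  then show ?thesis using assms(3-5) by (metis card_seteq empty_subsetI insert_subset)
qed

lemma wf_graph_contract:
  assumes "wf_graph G" "e \<in> edges G" "ends G e = {u, w}" "u \<noteq> w"
  shows "wf_graph (contract G e u w)"
proof -
  let ?g = "\<lambda>x. if x = w then u else x"
  have "card (?g ` ends G f) \<in> {1, 2}" if "f \<in> edges G" for f
  proof -
    have fin: "finite (ends G f)" "ends G f \<noteq> {}" "card (ends G f) \<le> 2"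
      using card_ends[OF assms(1) that] by (auto intro: card_ge_0_finite)
    then have "card (?g ` ends G f) \<le> 2" using card_image_le[of "ends G f" ?g] by linarith
    moreover have "card (?g ` ends G f) \<noteq> 0"
      using fin(2) card_0_eq[OF finite_imageI[OF fin(1)], of ?g] by blast
    ultimately show ?thesis by auto
  qed
  moreover have "u \<in> verts G" using ends_subset_verts[OF assms(1,2)] assms(3) by auto
  ultimately show ?thesis using assms(1,4) by (auto simp: wf_graph_def)
qed

lemma is_sminor_trans: "is_sminor A B \<Longrightarrow> is_sminor B C \<Longrightarrow> is_sminor A C"
  unfolding is_sminor_def by (rule rtranclp_trans)

lemma sminor_step_into_is_sminor: "sminor_step A B \<Longrightarrow> is_sminor B C \<Longrightarrow> is_sminor A C"
  unfolding is_sminor_def by (rule converse_rtranclp_into_rtranclp)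

lemma underlying_del_vertex: "underlying (del_vertex S v) = del_vertex (underlying S) v"
  by (simp add: underlying_def del_vertex_def)

lemma underlying_del_edge: "underlying (del_edge S e) = del_edge (underlying S) e"
  by (simp add: underlying_def del_edge_def)

lemma underlying_contract: "underlying (contract S e u w) = contract (underlying S) e u w"
  by (simp add: underlying_def contract_def)

lemma underlying_switch: "underlying (switch S v) = underlying S"
  by (simp add: underlying_def switch_def)

lemma sminor_step_underlying:
  assumes "sminor_step T S"
  shows "is_minor (underlying T) (underlying S)"
  using assms
proof cases
  case (1 v)
  then have "minor_step (del_vertex (underlying S) v) (underlying S)"
    by (intro minor_step.intros(1)) simp
  then show ?thesis using 1 unfolding is_minor_def by (simp add: underlying_del_vertex r_into_rtranclp)
next
  case (2 e)
  then have "minor_step (del_edge (underlying S) e) (underlying S)"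
    by (intro minor_step.intros(2)) simp
  then show ?thesis using 2 unfolding is_minor_def by (simp add: underlying_del_edge r_into_rtranclp)
next
  case (3 e u w)
  then have "minor_step (contract (underlying S) e u w) (underlying S)"
    by (intro minor_step.intros(3)) simp_all
  then show ?thesis using 3 unfolding is_minor_def by (simp add: underlying_contract r_into_rtranclp)
next
  case (4 v)
  then show ?thesis by (simp add: underlying_switch is_minor_def)
qed

lemma is_sminor_underlying: "is_sminor T S \<Longrightarrow> is_minor (underlying T) (underlying S)"
  unfolding is_sminor_def
proof (induction rule: converse_rtranclp_induct)
  case base
  then show ?case by (simp add: is_minor_def)
next
  case (step T T')
  from sminor_step_underlying[OF step(1)] step(3) show ?case
    unfolding is_minor_def by (rule rtranclp_trans)
qed

lemma is_sminor_delete_vertices: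
  assumes "finite D" "D \<subseteq> verts S"
  shows "is_sminor (S\<lparr>verts := verts S - D, edges := {e \<in> edges S. ends S e \<inter> D = {}}\<rparr>) S"
  using assms
proof (induction D rule: finite_induct)
  case empty
  then show ?case by (simp add: is_sminor_def)
next
  case (insert x D)
  let ?T = "S\<lparr>verts := verts S - D, edges := {e \<in> edges S. ends S e \<inter> D = {}}\<rparr>"
  have step: "sminor_step (del_vertex ?T x) ?T" using insert by (intro sminor_step.intros(1)) auto
  have IH: "is_sminor ?T S" using insert by simp
  have eq: "del_vertex ?T x
      = S\<lparr>verts := verts S - insert x D, edges := {e \<in> edges S. ends S e \<inter> insert x D = {}}\<rparr>"
  proof -
    have V: "verts S - D - {x} = verts S - insert x D" by blast
    have E: "{e \<in> {e \<in> edges S. ends S e \<inter> D = {}}. x \<notin> ends S e}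
        = {e \<in> edges S. ends S e \<inter> insert x D = {}}" by auto
    have "del_vertex ?T x = S\<lparr>verts := verts S - D - {x},
        edges := {e \<in> {e \<in> edges S. ends S e \<inter> D = {}}. x \<notin> ends S e}\<rparr>"
      by (simp add: del_vertex_def)
    then show ?thesis by (simp only: V E)
  qed
  show ?case using sminor_step_into_is_sminor[OF step IH] unfolding eq .
qed

lemma is_sminor_restrict_edges:
  assumes "finite (edges S)" "E \<subseteq> edges S"
  shows "is_sminor (S\<lparr>edges := E\<rparr>) S"
proof -
  have "is_sminor (S\<lparr>edges := edges S - L\<rparr>) S" if "finite L" "L \<subseteq> edges S" for L
    using that
  proof (induction L rule: finite_induct)
    case empty
    then show ?case by (simp add: is_sminor_def)
  next
    case (insert x L)
    let ?T = "S\<lparr>edges := edges S - L\<rparr>"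
    have step: "sminor_step (del_edge ?T x) ?T" using insert by (intro sminor_step.intros(2)) auto
    have IH: "is_sminor ?T S" using insert by simp
    have eq: "del_edge ?T x = S\<lparr>edges := edges S - insert x L\<rparr>"
    proof -
      have "del_edge ?T x = S\<lparr>edges := edges S - L - {x}\<rparr>" by (simp add: del_edge_def)
      moreover have "edges S - L - {x} = edges S - insert x L" by blast
      ultimately show ?thesis by (simp only:)
    qed
    show ?case using sminor_step_into_is_sminor[OF step IH] unfolding eq .
  qed
  from this[of "edges S - E"] have "is_sminor (S\<lparr>edges := edges S - (edges S - E)\<rparr>) S"
    using assms(1) by blast
  moreover have "edges S - (edges S - E) = E" using assms(2) by blast
  ultimately show ?thesis by simp
qed

section \<open>Switching and balance\<close>

text \<open>The sign of e after switching at the vertices where s holds.\<close>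
definition switched :: "('v,'e) sgraph \<Rightarrow> ('v \<Rightarrow> bool) \<Rightarrow> 'e \<Rightarrow> bool" where
  "switched S s e \<longleftrightarrow> (sign S e \<longleftrightarrow> (\<forall>a\<in>ends S e. \<forall>b\<in>ends S e. s a = s b))"

lemma switched_doubleton: "ends S e = {a, b} \<Longrightarrow> switched S s e \<longleftrightarrow> (sign S e \<longleftrightarrow> s a = s b)"
  by (auto simp: switched_def)

lemma is_sminor_switch:
  assumes "wf_graph S"
  obtains \<sigma> where "is_sminor (S\<lparr>sign := \<sigma>\<rparr>) S" "\<forall>e\<in>edges S. \<sigma> e = switched S s e"
proof -
  have "\<exists>\<sigma>. is_sminor (S\<lparr>sign := \<sigma>\<rparr>) S \<and> (\<forall>e\<in>edges S. \<sigma> e = switched S (\<lambda>v. v \<in> X) e)"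
    if "finite X" "X \<subseteq> verts S" for X
    using that
  proof (induction X rule: finite_induct)
    case empty
    have "S\<lparr>sign := sign S\<rparr> = S" by simp
    then show ?case by (metis empty_iff is_sminor_def rtranclp.rtrancl_refl switched_def)
  next
    case (insert x X)
    then obtain \<sigma> where IH: "is_sminor (S\<lparr>sign := \<sigma>\<rparr>) S"
      and \<sigma>: "\<forall>e\<in>edges S. \<sigma> e = switched S (\<lambda>v. v \<in> X) e" by auto
    let ?T = "S\<lparr>sign := \<sigma>\<rparr>"
    define \<sigma>' where "\<sigma>' = (\<lambda>f. if x \<in> ends S f \<and> \<not> is_loop S f then \<not> \<sigma> f else \<sigma> f)"
    have step: "sminor_step (switch ?T x) ?T" using insert by (intro sminor_step.intros(4)) auto
    have eq: "switch ?T x = S\<lparr>sign := \<sigma>'\<rparr>"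
      unfolding switch_def \<sigma>'_def is_loop_def by simp
    have "\<sigma>' e = switched S (\<lambda>v. v \<in> insert x X) e" if e: "e \<in> edges S" for e
    proof -
      obtain a b where ab: "ends S e = {a, b}" using obtain_ends[OF assms e] .
      have "is_loop S e \<longleftrightarrow> a = b" using ab by (cases "a = b") (auto simp: is_loop_def)
      then show ?thesis using \<sigma> e ab insert(2)
        by (cases "x = a"; cases "x = b") (auto simp: \<sigma>'_def switched_doubleton)
    qed
    then show ?case using sminor_step_into_is_sminor[OF step IH] unfolding eq by blast
  qed
  from this[of "{v \<in> verts S. s v}"] obtain \<sigma> where \<sigma>: "is_sminor (S\<lparr>sign := \<sigma>\<rparr>) S"
    "\<forall>e\<in>edges S. \<sigma> e = switched S (\<lambda>v. v \<in> {v \<in> verts S. s v}) e"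
    using assms by (auto simp: wf_graph_def)
  moreover have "switched S (\<lambda>v. v \<in> {v \<in> verts S. s v}) e = switched S s e" if "e \<in> edges S" for e
    using ends_subset_verts[OF assms that] by (auto simp: switched_def)
  ultimately show ?thesis using that by auto
qed

lemma even_card_changes_path:
  fixes f :: "nat \<Rightarrow> bool"
  shows "even (card {i. i < m \<and> f i \<noteq> f (Suc i)}) \<longleftrightarrow> f 0 = f m"
proof (induction m)
  case (Suc m)
  have "{i. i < Suc m \<and> f i \<noteq> f (Suc i)}
      = {i. i < m \<and> f i \<noteq> f (Suc i)} \<union> (if f m \<noteq> f (Suc m) then {m} else {})"
    by (auto simp: less_Suc_eq)
  then show ?case using Suc by (cases "f m = f (Suc m)") auto
qed simp

lemma even_card_changes_cycle:
  fixes f :: "nat \<Rightarrow> bool"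
  shows "even (card {i. i < n \<and> f i \<noteq> f (Suc i mod n)})"
proof -
  have "{i. i < n \<and> f i \<noteq> f (Suc i mod n)} = {i. i < n \<and> f (i mod n) \<noteq> f (Suc i mod n)}" by auto
  then show ?thesis using even_card_changes_path[of n "\<lambda>i. f (i mod n)"] by simp
qed

text \<open>The easy direction of Harary's balance theorem.\<close>
lemma balanced_setI_switching:
  assumes "\<forall>e\<in>edges S. ends S e \<subseteq> X \<longrightarrow> switched S s e"
  shows "balanced_set S X"
  unfolding balanced_set_def
proof
  assume "\<exists>vs es. negative_cycle S vs es \<and> set vs \<subseteq> X"
  then obtain vs es where nc: "negative_cycle S vs es" and sub: "set vs \<subseteq> X" by blast
  let ?n = "length vs"
  have cyc: "vs \<noteq> []" "length es = ?n" "set es \<subseteq> edges S"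
    "\<forall>i<?n. ends S (es ! i) = {vs ! i, vs ! (Suc i mod ?n)}"
    and odd: "odd (length (filter (\<lambda>e. \<not> sign S e) es))"
    using nc unfolding negative_cycle_def is_cycle_def by auto
  have "\<not> sign S (es ! i) \<longleftrightarrow> s (vs ! i) \<noteq> s (vs ! (Suc i mod ?n))" if i: "i < ?n" for i
  proof -
    have e: "es ! i \<in> edges S" using cyc(2,3) i by (metis nth_mem subsetD)
    have "0 < ?n" using cyc(1) by simp
    then have "vs ! i \<in> X" "vs ! (Suc i mod ?n) \<in> X"
      using subsetD[OF sub nth_mem] i by simp_all
    then have "switched S s (es ! i)" using assms e cyc(4) i by simp
    then show ?thesis using cyc(4) i by (simp add: switched_doubleton)
  qed
  then have "{i. i < length es \<and> \<not> sign S (es ! i)} = {i. i < ?n \<and> s (vs ! i) \<noteq> s (vs ! (Suc i mod ?n))}"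
    using cyc(2) by auto
  then have "even (length (filter (\<lambda>e. \<not> sign S e) es))"
    using even_card_changes_cycle[where f = "\<lambda>i. s (vs ! i)" and n = ?n] by (simp add: length_filter_conv_card)
  then show False using odd by simp
qed

section \<open>Contracting connected branch sets\<close>

definition adj_by :: "('v,'e,'x) mgraph_scheme \<Rightarrow> ('e \<Rightarrow> bool) \<Rightarrow> 'v \<Rightarrow> 'v \<Rightarrow> bool" where
  "adj_by G P x y \<longleftrightarrow> x \<noteq> y \<and> (\<exists>e\<in>edges G. P e \<and> ends G e = {x, y})"

definition connected_on :: "('v \<Rightarrow> 'v \<Rightarrow> bool) \<Rightarrow> 'v set \<Rightarrow> bool" where
  "connected_on R X \<longleftrightarrow> (\<forall>a\<in>X. \<forall>b\<in>X. (\<lambda>x y. x \<in> X \<and> y \<in> X \<and> R x y)\<^sup>*\<^sup>* a b)"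

lemma adj_by_underlying [simp]: "adj_by (underlying S) = adj_by S"
  by (simp add: adj_by_def fun_eq_iff)

lemma adj_by_pos_of [simp]: "adj_by (pos_of G) = adj_by G"
  by (simp add: adj_by_def fun_eq_iff)

lemma adj_by_sign_update [simp]: "adj_by (S\<lparr>sign := \<sigma>\<rparr>) = adj_by S"
  by (simp add: adj_by_def fun_eq_iff)

lemma symp_adj_by: "symp (adj_by G P)"
  unfolding adj_by_def symp_def by (auto simp: insert_commute)

lemma connected_on_singleton: "connected_on R {a}"
  unfolding connected_on_def by auto

lemma connected_on_mono:
  assumes "connected_on R X" "\<And>x y. x \<in> X \<Longrightarrow> y \<in> X \<Longrightarrow> R x y \<Longrightarrow> R' x y"
  shows "connected_on R' X"
  unfolding connected_on_def
proof (intro ballI)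
  fix a b assume "a \<in> X" "b \<in> X"
  then have "(\<lambda>x y. x \<in> X \<and> y \<in> X \<and> R x y)\<^sup>*\<^sup>* a b" using assms(1) by (simp add: connected_on_def)
  then show "(\<lambda>x y. x \<in> X \<and> y \<in> X \<and> R' x y)\<^sup>*\<^sup>* a b"
    by (rule rtranclp_mono[THEN predicate2D, rotated]) (auto intro: assms(2))
qed

lemma connected_on_Un:
  assumes A: "connected_on R A" and B: "connected_on R B"
    and ab: "a \<in> A" "b \<in> B" "R a b" and "symp R"
  shows "connected_on R (A \<union> B)"
proof -
  let ?r = "\<lambda>x y. x \<in> A \<union> B \<and> y \<in> A \<union> B \<and> R x y"
  have sym: "symp ?r\<^sup>*\<^sup>*" using \<open>symp R\<close> by (intro symp_rtranclp) (auto simp: symp_def)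
  have inside: "?r\<^sup>*\<^sup>* x y" if "connected_on R C" "C \<subseteq> A \<union> B" "x \<in> C" "y \<in> C" for C x y
  proof -
    have "(\<lambda>x y. x \<in> C \<and> y \<in> C \<and> R x y)\<^sup>*\<^sup>* x y" using that by (simp add: connected_on_def)
    then show ?thesis by (rule rtranclp_mono[THEN predicate2D, rotated]) (use that(2) in auto)
  qed
  have across: "?r\<^sup>*\<^sup>* x y" if "x \<in> A" "y \<in> B" for x y
  proof -
    have "?r\<^sup>*\<^sup>* x a" "?r\<^sup>*\<^sup>* b y" using inside A B that ab by auto
    moreover have "?r a b" using ab by blast
    ultimately have "?r\<^sup>*\<^sup>* x b" "?r\<^sup>*\<^sup>* b y" by (auto intro: rtranclp.rtrancl_into_rtrancl)
    then show ?thesis by (rule rtranclp_trans)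
  qed
  show ?thesis unfolding connected_on_def
  proof (intro ballI)
    fix x y assume "x \<in> A \<union> B" "y \<in> A \<union> B"
    then consider "x \<in> A" "y \<in> A" | "x \<in> B" "y \<in> B" | "x \<in> A" "y \<in> B" | "x \<in> B" "y \<in> A"
      by blast
    then show "?r\<^sup>*\<^sup>* x y"
    proof cases
      case 4
      then show ?thesis using across sym by (blast dest: sympD)
    qed (use inside A B across in auto)
  qed
qed

lemma connected_on_image:
  assumes "connected_on R X"
    and "\<And>x y. x \<in> X \<Longrightarrow> y \<in> X \<Longrightarrow> R x y \<Longrightarrow> g x \<noteq> g y \<Longrightarrow> R' (g x) (g y)"
  shows "connected_on R' (g ` X)"
  unfolding connected_on_def
proof (intro ballI)
  let ?r' = "\<lambda>x y. x \<in> g ` X \<and> y \<in> g ` X \<and> R' x y"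
  fix ga gb assume "ga \<in> g ` X" "gb \<in> g ` X"
  then obtain a b where ab: "a \<in> X" "b \<in> X" "ga = g a" "gb = g b" by blast
  have "(\<lambda>x y. x \<in> X \<and> y \<in> X \<and> R x y)\<^sup>*\<^sup>* a b" using assms(1) ab by (simp add: connected_on_def)
  then have "?r'\<^sup>*\<^sup>* (g a) (g b)"
  proof (induction rule: rtranclp_induct)
    case (step y z)
    show ?case
    proof (cases "g y = g z")
      case True
      then show ?thesis using step.IH by simp
    next
      case False
      then have "?r' (g y) (g z)" using step(2) assms(2)[of y z] by blast
      with step.IH show ?thesis by (rule rtranclp.rtrancl_into_rtrancl)
    qed
  qed simp
  then show "?r'\<^sup>*\<^sup>* ga gb" using ab by simp
qed

text \<open>\<rho> v = Some r puts v into the branch set represented by r, and \<rho> v = None deletes v;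
  branch sets must be connected through edges satisfying P.\<close>
definition branch_map :: "('v,'e,'x) mgraph_scheme \<Rightarrow> ('e \<Rightarrow> bool) \<Rightarrow> ('v \<Rightarrow> 'v option) \<Rightarrow> bool" where
  "branch_map G P \<rho> \<longleftrightarrow> (\<forall>v r. \<rho> v = Some r \<longrightarrow> v \<in> verts G \<and> \<rho> r = Some r) \<and>
     (\<forall>r. \<rho> r = Some r \<longrightarrow> connected_on (adj_by G P) {v. \<rho> v = Some r})"

lemma branch_map_ran: "branch_map G P \<phi> \<Longrightarrow> r \<in> ran \<phi> \<Longrightarrow> \<phi> r = Some r"
  by (auto simp: branch_map_def ran_def)

lemma ran_branch_map: "branch_map G P \<phi> \<Longrightarrow> {r. \<phi> r = Some r} = ran \<phi>"
  by (auto simp: branch_map_ran intro: ranI)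

definition branch_quotient :: "('v,'e) sgraph \<Rightarrow> ('v \<Rightarrow> 'v option) \<Rightarrow> ('v,'e) sgraph \<Rightarrow> bool" where
  "branch_quotient S \<rho> T \<longleftrightarrow> verts T = {r. \<rho> r = Some r} \<and>
     edges T = {e \<in> edges S. ends S e \<subseteq> dom \<rho> \<and> card ((the \<circ> \<rho>) ` ends S e) = 2} \<and>
     (\<forall>e\<in>edges T. ends T e = (the \<circ> \<rho>) ` ends S e) \<and> sign T = sign S"

lemma branch_quotient_edge:
  assumes "branch_quotient S \<rho> T" "e \<in> edges S" "ends S e = {a, b}"
    "\<rho> a = Some x" "\<rho> b = Some y" "x \<noteq> y"
  shows "e \<in> edges T" "ends T e = {x, y}"
proof -
  have "(the \<circ> \<rho>) ` ends S e = {x, y}" using assms(3-5) by auto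
  then show "e \<in> edges T" "ends T e = {x, y}"
    using assms unfolding branch_quotient_def by (auto simp: dom_def)
qed

lemma loopless_branch_quotient: "branch_quotient S \<rho> T \<Longrightarrow> loopless T"
  unfolding branch_quotient_def loopless_def is_loop_def by auto

lemma wf_graph_branch_quotient:
  assumes "wf_graph S" "branch_map S P \<rho>" "branch_quotient S \<rho> T"
  shows "wf_graph T"
proof -
  have reps: "\<rho> a = Some r \<Longrightarrow> r \<in> verts T" for a r
    using assms(2,3) by (simp add: branch_map_def branch_quotient_def)
  have "verts T \<subseteq> verts S" "edges T \<subseteq> edges S"
    using assms(2,3) by (auto simp: branch_map_def branch_quotient_def)
  then have "finite (verts T)" "finite (edges T)"
    using assms(1) by (auto simp: wf_graph_def intro: finite_subset)
  moreover have "ends T e \<subseteq> verts T \<and> card (ends T e) \<in> {1, 2}" if "e \<in> edges T" for e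
  proof -
    have e: "ends S e \<subseteq> dom \<rho>" "card ((the \<circ> \<rho>) ` ends S e) = 2" "ends T e = (the \<circ> \<rho>) ` ends S e"
      using that assms(3) by (auto simp: branch_quotient_def)
    have "(the \<circ> \<rho>) ` ends S e \<subseteq> verts T" using e(1) reps by (auto simp: dom_def)
    then show ?thesis using e(2,3) by simp
  qed
  ultimately show ?thesis by (simp add: wf_graph_def)
qed

lemma is_sminor_branch_quotient_singletons:
  assumes wf: "wf_graph S" and \<rho>: "\<And>v r. \<rho> v = Some r \<Longrightarrow> v \<in> verts S \<and> r = v"
  obtains T where "is_sminor T S" "branch_quotient S \<rho> T"
proof -
  define D where "D = verts S - dom \<rho>"
  define S1 where "S1 = S\<lparr>verts := verts S - D, edges := {e \<in> edges S. ends S e \<inter> D = {}}\<rparr>"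
  define T where "T = S1\<lparr>edges := {e \<in> edges S1. card (ends S e) = 2}\<rparr>"
  have "is_sminor S1 S" unfolding S1_def D_def using wf
    by (intro is_sminor_delete_vertices) (auto simp: wf_graph_def)
  moreover have "is_sminor T S1" unfolding T_def using wf
    by (intro is_sminor_restrict_edges) (auto simp: S1_def wf_graph_def)
  ultimately have "is_sminor T S" by (rule is_sminor_trans[rotated])
  moreover have "branch_quotient S \<rho> T"
  proof -
    have id: "(the \<circ> \<rho>) ` A = A" if "A \<subseteq> dom \<rho>" for A
      using that \<rho> by (force simp: dom_def)
    have "verts T = {r. \<rho> r = Some r}" using \<rho> by (auto simp: T_def S1_def D_def dom_def)
    moreover have "ends S e \<inter> D = {} \<longleftrightarrow> ends S e \<subseteq> dom \<rho>" if "e \<in> edges S" for e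
      using ends_subset_verts[OF wf that] by (auto simp: D_def)
    then have "edges T = {e \<in> edges S. ends S e \<subseteq> dom \<rho> \<and> card ((the \<circ> \<rho>) ` ends S e) = 2}"
      using id by (auto simp: T_def S1_def)
    moreover have "\<forall>e\<in>edges T. ends T e = (the \<circ> \<rho>) ` ends S e"
      using calculation(2) id by (auto simp: T_def S1_def)
    ultimately show ?thesis by (simp add: branch_quotient_def T_def S1_def)
  qed
  ultimately show ?thesis using that by blast
qed

lemma branch_map_edge_into:
  assumes "branch_map G P \<rho>" "\<rho> w = Some r" "r \<noteq> w"
  obtains y f where "f \<in> edges G" "P f" "ends G f = {y, w}" "y \<noteq> w" "\<rho> y = Some r"
proof -
  let ?F = "{v. \<rho> v = Some r}"
  have "\<rho> r = Some r" using assms(1,2) by (simp add: branch_map_def)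
  then have "(\<lambda>x y. x \<in> ?F \<and> y \<in> ?F \<and> adj_by G P x y)\<^sup>*\<^sup>* r w"
    using assms(1,2) by (simp add: branch_map_def connected_on_def)
  then obtain y where "y \<in> ?F" "adj_by G P y w"
    using assms(3) by (cases rule: rtranclp.cases) auto
  then show ?thesis using that by (auto simp: adj_by_def)
qed

context
  fixes S :: "('v,'e) sgraph" and \<rho> :: "'v \<Rightarrow> 'v option" and f :: 'e and y w r :: 'v
  assumes f: "f \<in> edges S" "ends S f = {y, w}" "y \<noteq> w"
    and fibre: "\<rho> y = Some r" "\<rho> w = Some r" "r \<noteq> w"
begin

private lemma contract_fibre: "(\<rho>(w := None)) (if a = w then y else a) = \<rho> a"
  using fibre f(3) by auto

private lemma image_contract_fibre:
  "(the \<circ> \<rho>(w := None)) ` (\<lambda>a. if a = w then y else a) ` A = (the \<circ> \<rho>) ` A"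
  unfolding image_image comp_def contract_fibre ..

lemma branch_map_contract:
  assumes "branch_map S (sign S) \<rho>" "sign S f"
  shows "branch_map (contract S f y w) (sign S) (\<rho>(w := None))"
proof -
  let ?\<rho>' = "\<rho>(w := None)" and ?S' = "contract S f y w" and ?g = "\<lambda>a. if a = w then y else a"
  have reps: "\<rho> v = Some r' \<Longrightarrow> v \<in> verts S \<and> \<rho> r' = Some r'" for v r'
    using assms(1) by (simp add: branch_map_def)
  have "v \<in> verts ?S' \<and> ?\<rho>' r' = Some r'" if "?\<rho>' v = Some r'" for v r'
  proof -
    have "v \<noteq> w" "\<rho> v = Some r'" using that by (auto split: if_splits)
    moreover have "r' \<noteq> w" using reps[OF \<open>\<rho> v = Some r'\<close>] fibre(2,3) by auto
    ultimately show ?thesis using reps by simp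
  qed
  moreover have "connected_on (adj_by ?S' (sign S)) {v. ?\<rho>' v = Some r'}"
    if r': "?\<rho>' r' = Some r'" for r'
  proof -
    let ?F = "{v. \<rho> v = Some r'}"
    have "\<rho> r' = Some r'" "r' \<noteq> w" using r' by (auto split: if_splits)
    then have "connected_on (adj_by S (sign S)) ?F" using assms(1) by (simp add: branch_map_def)
    then have "connected_on (adj_by ?S' (sign S)) (?g ` ?F)"
    proof (rule connected_on_image)
      fix a b assume "adj_by S (sign S) a b" "?g a \<noteq> ?g b"
      then obtain e where e: "e \<in> edges S" "sign S e" "ends S e = {a, b}" by (auto simp: adj_by_def)
      have "e \<noteq> f" using e(3) f(2) \<open>?g a \<noteq> ?g b\<close> by (auto simp: doubleton_eq_iff)
      then show "adj_by ?S' (sign S) (?g a) (?g b)"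
        using e \<open>?g a \<noteq> ?g b\<close> unfolding adj_by_def by (intro conjI bexI[of _ e]) auto
    qed
    moreover have "?g ` ?F = {v. ?\<rho>' v = Some r'}"
    proof (cases "r' = r")
      case True
      then show ?thesis using fibre f(3) by (auto simp: image_iff)
    next
      case False
      then show ?thesis using fibre by (force simp: image_iff)
    qed
    ultimately show ?thesis by simp
  qed
  ultimately show ?thesis by (simp add: branch_map_def)
qed

lemma branch_quotient_contract:
  assumes "branch_quotient (contract S f y w) (\<rho>(w := None)) T"
  shows "branch_quotient S \<rho> T"
proof -
  let ?\<rho>' = "\<rho>(w := None)"
  have dom: "(\<lambda>a. if a = w then y else a) ` A \<subseteq> dom ?\<rho>' \<longleftrightarrow> A \<subseteq> dom \<rho>" for A
    unfolding image_subset_iff dom_def mem_Collect_eq contract_fibre by blast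
  have "card ((the \<circ> \<rho>) ` ends S f) = 1" using f(2) fibre(1,2) by simp
  then have "{e \<in> edges S - {f}. ends S e \<subseteq> dom \<rho> \<and> card ((the \<circ> \<rho>) ` ends S e) = 2}
      = {e \<in> edges S. ends S e \<subseteq> dom \<rho> \<and> card ((the \<circ> \<rho>) ` ends S e) = 2}" by auto
  moreover have "{r'. ?\<rho>' r' = Some r'} = {r'. \<rho> r' = Some r'}" using fibre(2,3) by auto
  ultimately show ?thesis using assms
    unfolding branch_quotient_def contract_simps image_contract_fibre dom by simp
qed

end

lemma branch_map_contraction_step:
  assumes "wf_graph S" "branch_map S (sign S) \<rho>" "\<rho> w = Some r" "r \<noteq> w"
  obtains S' where "sminor_step S' S" "wf_graph S'" "verts S' = verts S - {w}"
    "branch_map S' (sign S') (\<rho>(w := None))"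
    "\<forall>T. branch_quotient S' (\<rho>(w := None)) T \<longrightarrow> branch_quotient S \<rho> T"
proof -
  obtain y f where f: "f \<in> edges S" "sign S f" "ends S f = {y, w}" "y \<noteq> w" "\<rho> y = Some r"
    using branch_map_edge_into[OF assms(2-4)] .
  show ?thesis
  proof (rule that)
    show "sminor_step (contract S f y w) S" using sminor_step.intros(3)[OF f(1-4)] .
    show "wf_graph (contract S f y w)" using wf_graph_contract[OF assms(1) f(1,3,4)] .
    show "branch_map (contract S f y w) (sign (contract S f y w)) (\<rho>(w := None))"
      using branch_map_contract[OF f(1,3,4,5) assms(3,4) assms(2) f(2)] by simp
  qed (simp_all add: branch_quotient_contract[OF f(1,3,4,5) assms(3,4)])
qed

lemma is_sminor_branch_quotient:
  assumes "wf_graph S" "branch_map S (sign S) \<rho>"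
  obtains T where "is_sminor T S" "branch_quotient S \<rho> T"
proof -
  have "\<exists>T. is_sminor T S \<and> branch_quotient S \<rho> T"
    if "card {v \<in> verts S. \<rho> v \<noteq> None \<and> \<rho> v \<noteq> Some v} = n" "wf_graph S" "branch_map S (sign S) \<rho>"
    for n and S :: "('v,'e) sgraph" and \<rho>
    using that
  proof (induction n arbitrary: S \<rho> rule: less_induct)
    case (less n S \<rho>)
    let ?NR = "{v \<in> verts S. \<rho> v \<noteq> None \<and> \<rho> v \<noteq> Some v}"
    show ?case
    proof (cases "?NR = {}")
      case True
      have "v \<in> verts S \<and> r = v" if "\<rho> v = Some r" for v r
      proof -
        have "v \<in> verts S" using that less.prems(3) by (simp add: branch_map_def)
        then show ?thesis using that True by auto
      qed
      then show ?thesis using is_sminor_branch_quotient_singletons[OF less.prems(2)] by blast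
    next
      case False
      then obtain w r where w: "w \<in> verts S" "\<rho> w = Some r" "r \<noteq> w" by auto
      obtain S' where S': "sminor_step S' S" "wf_graph S'" "verts S' = verts S - {w}"
        "branch_map S' (sign S') (\<rho>(w := None))"
        "\<forall>T. branch_quotient S' (\<rho>(w := None)) T \<longrightarrow> branch_quotient S \<rho> T"
        using branch_map_contraction_step[OF less.prems(2,3) w(2,3)] .
      have "finite ?NR" using less.prems(2) by (simp add: wf_graph_def)
      then have "card (?NR - {w}) < card ?NR" using w by (intro card_Diff1_less) auto
      moreover have "{v \<in> verts S'. (\<rho>(w := None)) v \<noteq> None \<and> (\<rho>(w := None)) v \<noteq> Some v} = ?NR - {w}"
        using S'(3) by auto
      ultimately have "card {v \<in> verts S'. (\<rho>(w := None)) v \<noteq> None \<and> (\<rho>(w := None)) v \<noteq> Some v} < n"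
        using less.prems(1) by simp
      then obtain T where "is_sminor T S'" "branch_quotient S' (\<rho>(w := None)) T"
        using less.IH[OF _ refl S'(2,4)] by blast
      moreover from this(1) S'(1) have "is_sminor T S"
        unfolding is_sminor_def by (rule rtranclp.rtrancl_into_rtrancl)
      ultimately show ?thesis using S'(5) by blast
    qed
  qed
  then show ?thesis using assms that by blast
qed

definition minor_model :: "('v,'e) mgraph \<Rightarrow> ('v,'e) mgraph \<Rightarrow> ('v \<Rightarrow> 'v option) \<Rightarrow> bool" where
  "minor_model H G \<phi> \<longleftrightarrow> branch_map G (\<lambda>_. True) \<phi> \<and> verts H = ran \<phi> \<and> edges H \<subseteq> edges G \<and>
     (\<forall>e\<in>edges H. ends G e \<subseteq> dom \<phi> \<and> ends H e = (the \<circ> \<phi>) ` ends G e)"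

lemma minor_model_refl:
  assumes "wf_graph G"
  shows "minor_model G G (\<lambda>v. if v \<in> verts G then Some v else None)"
proof -
  let ?\<phi> = "\<lambda>v. if v \<in> verts G then Some v else None"
  have "{v. ?\<phi> v = Some r} = {r}" if "r \<in> verts G" for r using that by auto
  then have "branch_map G (\<lambda>_. True) ?\<phi>"
    by (simp add: branch_map_def connected_on_singleton)
  moreover have "ran ?\<phi> = verts G" by (auto simp: ran_def)
  moreover have "ends G e \<subseteq> dom ?\<phi> \<and> ends G e = (the \<circ> ?\<phi>) ` ends G e" if "e \<in> edges G" for e
    using ends_subset_verts[OF assms that] by (force simp: dom_def)
  ultimately show ?thesis by (simp add: minor_model_def)
qed

lemma minor_model_del_vertex:
  assumes "minor_model H G \<phi>" "x \<in> verts H"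
  shows "minor_model (del_vertex H x) G (\<lambda>v. if \<phi> v = Some x then None else \<phi> v)"
proof -
  let ?\<phi> = "\<lambda>v. if \<phi> v = Some x then None else \<phi> v"
  have bm: "branch_map G (\<lambda>_. True) \<phi>" and V: "verts H = ran \<phi>"
    and E: "edges H \<subseteq> edges G" "\<And>e. e \<in> edges H \<Longrightarrow> ends G e \<subseteq> dom \<phi> \<and> ends H e = (the \<circ> \<phi>) ` ends G e"
    using assms(1) by (auto simp: minor_model_def)
  have fibre: "{v. ?\<phi> v = Some r} = {v. \<phi> v = Some r}" if "r \<noteq> x" for r using that by auto
  have reps: "\<phi> v = Some r \<Longrightarrow> v \<in> verts G \<and> \<phi> r = Some r" for v r
    using bm by (simp add: branch_map_def)
  have "?\<phi> v = Some r \<Longrightarrow> v \<in> verts G \<and> ?\<phi> r = Some r" for v r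
    using reps by (auto split: if_splits)
  moreover have "connected_on (adj_by G (\<lambda>_. True)) {v. ?\<phi> v = Some r}" if "?\<phi> r = Some r" for r
  proof -
    have "r \<noteq> x" "\<phi> r = Some r" using that by (auto split: if_splits)
    then show ?thesis using bm fibre by (simp add: branch_map_def)
  qed
  ultimately have "branch_map G (\<lambda>_. True) ?\<phi>" by (simp add: branch_map_def)
  moreover have "ran ?\<phi> = ran \<phi> - {x}"
  proof
    show "ran ?\<phi> \<subseteq> ran \<phi> - {x}" by (auto simp: ran_def split: if_splits)
    show "ran \<phi> - {x} \<subseteq> ran ?\<phi>"
    proof
      fix r assume "r \<in> ran \<phi> - {x}"
      then have "?\<phi> r = Some r" using branch_map_ran[OF bm] by auto
      then show "r \<in> ran ?\<phi>" by (rule ranI)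
    qed
  qed
  moreover have "ends G e \<subseteq> dom ?\<phi> \<and> ends (del_vertex H x) e = (the \<circ> ?\<phi>) ` ends G e"
    if "e \<in> edges (del_vertex H x)" for e
  proof -
    have "e \<in> edges H" "x \<notin> (the \<circ> \<phi>) ` ends G e" using that E(2) by auto
    then have "\<phi> a \<noteq> Some x" if "a \<in> ends G e" for a using that by force
    then show ?thesis using E(2)[OF \<open>e \<in> edges H\<close>] by (auto simp: dom_def)
  qed
  ultimately show ?thesis using V E(1) by (auto simp: minor_model_def)
qed

lemma minor_model_del_edge: "minor_model H G \<phi> \<Longrightarrow> minor_model (del_edge H e) G \<phi>"
  by (auto simp: minor_model_def)

lemma branch_map_merge:
  assumes bm: "branch_map G P \<phi>"
    and ab: "\<phi> a = Some u" "\<phi> b = Some w" "adj_by G P a b" "u \<noteq> w"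
  shows "branch_map G P (\<lambda>v. if \<phi> v = Some w then Some u else \<phi> v)" (is "branch_map G P ?\<phi>")
    and "ran (\<lambda>v. if \<phi> v = Some w then Some u else \<phi> v) = ran \<phi> - {w}"
proof -
  have reps: "\<phi> v = Some r \<Longrightarrow> v \<in> verts G \<and> \<phi> r = Some r" for v r
    using bm by (simp add: branch_map_def)
  have uw: "\<phi> u = Some u" "\<phi> w = Some w" using reps ab(1,2) by blast+
  have "connected_on (adj_by G P) {v. ?\<phi> v = Some r}" if r: "?\<phi> r = Some r" for r
  proof (cases "r = u")
    case True
    have "connected_on (adj_by G P) ({v. \<phi> v = Some u} \<union> {v. \<phi> v = Some w})"
      using bm uw ab symp_adj_by by (intro connected_on_Un) (auto simp: branch_map_def)
    moreover have "{v. ?\<phi> v = Some r} = {v. \<phi> v = Some u} \<union> {v. \<phi> v = Some w}"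
      using True ab(4) by auto
    ultimately show ?thesis by simp
  next
    case False
    then have "\<phi> r = Some r" "r \<noteq> w" using r by (auto split: if_splits)
    moreover have "{v. ?\<phi> v = Some r} = {v. \<phi> v = Some r}" using False \<open>r \<noteq> w\<close> by auto
    ultimately show ?thesis using bm by (simp add: branch_map_def)
  qed
  moreover have "?\<phi> v = Some r \<Longrightarrow> v \<in> verts G \<and> ?\<phi> r = Some r" for v r
    using reps uw ab(4) by (auto split: if_splits)
  ultimately show "branch_map G P ?\<phi>" by (simp add: branch_map_def)
  show "ran ?\<phi> = ran \<phi> - {w}"
  proof
    show "ran ?\<phi> \<subseteq> ran \<phi> - {w}"
      using ab(1,4) by (auto simp: ran_def split: if_splits)
    show "ran \<phi> - {w} \<subseteq> ran ?\<phi>"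
    proof
      fix r assume "r \<in> ran \<phi> - {w}"
      then have "?\<phi> r = Some r" using branch_map_ran[OF bm] by auto
      then show "r \<in> ran ?\<phi>" by (rule ranI)
    qed
  qed
qed

lemma minor_model_contract:
  assumes "minor_model H G \<phi>" "wf_graph G" "e \<in> edges H" "ends H e = {u, w}" "u \<noteq> w"
  shows "minor_model (contract H e u w) G (\<lambda>v. if \<phi> v = Some w then Some u else \<phi> v)"
proof -
  let ?\<phi> = "\<lambda>v. if \<phi> v = Some w then Some u else \<phi> v"
  have bm: "branch_map G (\<lambda>_. True) \<phi>" and V: "verts H = ran \<phi>"
    and E: "edges H \<subseteq> edges G" "\<And>e. e \<in> edges H \<Longrightarrow> ends G e \<subseteq> dom \<phi> \<and> ends H e = (the \<circ> \<phi>) ` ends G e"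
    using assms(1) by (auto simp: minor_model_def)
  have "u \<in> (the \<circ> \<phi>) ` ends G e" "w \<in> (the \<circ> \<phi>) ` ends G e"
    using E(2)[OF assms(3)] assms(4) by auto
  then obtain a b where "a \<in> ends G e" "b \<in> ends G e" "the (\<phi> a) = u" "the (\<phi> b) = w" by auto
  moreover have "ends G e \<subseteq> dom \<phi>" using E(2)[OF assms(3)] by blast
  ultimately have ab: "a \<in> ends G e" "b \<in> ends G e" "\<phi> a = Some u" "\<phi> b = Some w"
    by (auto simp: dom_def)
  have "a \<noteq> b" using ab assms(5) by auto
  then have "adj_by G (\<lambda>_. True) a b"
    using ends_eq_doubleton[OF assms(2) _ ab(1,2)] E(1) assms(3) by (auto simp: adj_by_def)
  note merge = branch_map_merge[OF bm ab(3,4) this assms(5)]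
  have "ends G f \<subseteq> dom ?\<phi> \<and> ends (contract H e u w) f = (the \<circ> ?\<phi>) ` ends G f"
    if "f \<in> edges (contract H e u w)" for f
  proof -
    have f: "ends G f \<subseteq> dom \<phi>" "ends H f = (the \<circ> \<phi>) ` ends G f" using that E(2) by auto
    have "(the \<circ> ?\<phi>) ` ends G f = (\<lambda>x. if x = w then u else x) ` (the \<circ> \<phi>) ` ends G f"
      unfolding image_image using f(1) by (intro image_cong) (auto simp: dom_def)
    then show ?thesis using f by (auto simp: dom_def)
  qed
  then show ?thesis using merge V E(1) by (auto simp: minor_model_def)
qed

lemma minor_model_of_minor:
  assumes "wf_graph G" "is_minor H G"
  obtains \<phi> where "minor_model H G \<phi>"
proof -
  have "\<exists>\<phi>. minor_model H G \<phi>"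
    using assms(2) unfolding is_minor_def
  proof (induction rule: converse_rtranclp_induct)
    case base
    then show ?case using minor_model_refl[OF assms(1)] by blast
  next
    case (step H H')
    then obtain \<phi> where \<phi>: "minor_model H' G \<phi>" by blast
    from step(1) show ?case
    proof cases
      case (1 v)
      then show ?thesis using minor_model_del_vertex[OF \<phi>] by blast
    next
      case (2 e)
      then show ?thesis using minor_model_del_edge[OF \<phi>] by blast
    next
      case (3 e u w)
      then show ?thesis using minor_model_contract[OF \<phi> assms(1)] by blast
    qed
  qed
  then show ?thesis using that by blast
qed

definition clique_model :: "('v,'e,'x) mgraph_scheme \<Rightarrow> ('v \<Rightarrow> 'v option) \<Rightarrow> nat \<Rightarrow> bool" where
  "clique_model G \<phi> k \<longleftrightarrow> branch_map G (\<lambda>_. True) \<phi> \<and> card (ran \<phi>) = k \<and>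
     (\<forall>x\<in>ran \<phi>. \<forall>y\<in>ran \<phi>. x \<noteq> y \<longrightarrow>
        (\<exists>a b. \<phi> a = Some x \<and> \<phi> b = Some y \<and> adj_by G (\<lambda>_. True) a b))"

lemma clique_model_underlying [simp]: "clique_model (underlying S) = clique_model S"
  by (intro ext) (simp add: clique_model_def branch_map_def)

lemma clique_model_pos_of [simp]: "clique_model (pos_of G) = clique_model G"
  by (intro ext) (simp add: clique_model_def branch_map_def)

lemma clique_model_of_minor:
  assumes G: "wf_graph G" and "is_minor H G"
    and complete: "\<forall>x\<in>verts H. \<forall>y\<in>verts H. x \<noteq> y \<longrightarrow> adj_by H (\<lambda>_. True) x y"
  obtains \<phi> where "clique_model G \<phi> (card (verts H))"
proof -
  obtain \<phi> where \<phi>: "minor_model H G \<phi>" using minor_model_of_minor[OF assms(1,2)] .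
  have "\<exists>a b. \<phi> a = Some x \<and> \<phi> b = Some y \<and> adj_by G (\<lambda>_. True) a b"
    if xy: "x \<in> verts H" "y \<in> verts H" "x \<noteq> y" for x y
  proof -
    have "adj_by H (\<lambda>_. True) x y" using complete xy by blast
    then obtain e where e: "e \<in> edges H" "ends H e = {x, y}" by (auto simp: adj_by_def)
    then have eG: "e \<in> edges G" "ends G e \<subseteq> dom \<phi>" "(the \<circ> \<phi>) ` ends G e = {x, y}"
      using \<phi> by (auto simp: minor_model_def)
    have "x \<in> (the \<circ> \<phi>) ` ends G e" "y \<in> (the \<circ> \<phi>) ` ends G e" unfolding eG(3) by simp_all
    then obtain a b where "a \<in> ends G e" "the (\<phi> a) = x" "b \<in> ends G e" "the (\<phi> b) = y"
      by (auto elim!: imageE)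
    moreover from this have "\<phi> a = Some x" "\<phi> b = Some y" using eG(2) by (auto simp: dom_def)
    ultimately show ?thesis
      using ends_eq_doubleton[OF G eG(1)] xy(3) eG(1) unfolding adj_by_def by blast
  qed
  moreover have "verts H = ran \<phi>" "branch_map G (\<lambda>_. True) \<phi>" using \<phi> by (simp_all add: minor_model_def)
  ultimately have "clique_model G \<phi> (card (verts H))" by (simp add: clique_model_def)
  then show ?thesis using that by blast
qed

lemma adj_by_is_K:
  assumes "is_K H k" "x \<in> verts H" "y \<in> verts H" "x \<noteq> y"
  shows "adj_by H (\<lambda>_. True) x y"
proof -
  have "card {e \<in> edges H. ends H e = {x, y}} = 1" using assms by (simp add: is_K_def)
  then obtain e where "{e \<in> edges H. ends H e = {x, y}} = {e}" by (rule card_1_singletonE)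
  then show ?thesis using assms(4) by (auto simp: adj_by_def)
qed

lemma adj_by_is_tildeK:
  assumes "is_tildeK T k" "x \<in> verts T" "y \<in> verts T" "x \<noteq> y"
  shows "adj_by T (\<lambda>_. True) x y"
proof -
  have "card {e \<in> edges T. ends T e = {x, y} \<and> sign T e} = 1" using assms by (simp add: is_tildeK_def)
  then obtain e where "{e \<in> edges T. ends T e = {x, y} \<and> sign T e} = {e}" by (rule card_1_singletonE)
  then show ?thesis using assms(4) by (auto simp: adj_by_def)
qed

text \<open>The positive parallel edges make the branch sets positively connected, so that they may be
  contracted.\<close>
lemma is_sminor_clique_quotient:
  assumes S: "wf_graph S" and \<phi>: "clique_model S \<phi> k"
    and pos: "\<forall>e\<in>edges S. \<exists>f\<in>edges S. ends S f = ends S e \<and> sign S f"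
  obtains T where "is_sminor T S" "branch_quotient S \<phi> T" "wf_graph T" "loopless T" "verts T = ran \<phi>"
proof -
  have bm: "branch_map S (\<lambda>_. True) \<phi>" using \<phi> by (simp add: clique_model_def)
  have "connected_on (adj_by S (sign S)) {v. \<phi> v = Some r}" if "\<phi> r = Some r" for r
  proof (rule connected_on_mono)
    show "connected_on (adj_by S (\<lambda>_. True)) {v. \<phi> v = Some r}"
      using bm that by (simp add: branch_map_def)
  next
    fix x y assume "adj_by S (\<lambda>_. True) x y"
    then obtain e where "e \<in> edges S" "ends S e = {x, y}" "x \<noteq> y" by (auto simp: adj_by_def)
    moreover from this obtain f where "f \<in> edges S" "ends S f = {x, y}" "sign S f" using pos by blast
    ultimately show "adj_by S (sign S) x y" by (auto simp: adj_by_def)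
  qed
  then have "branch_map S (sign S) \<phi>" using bm by (simp add: branch_map_def)
  then obtain T where T: "is_sminor T S" "branch_quotient S \<phi> T"
    using is_sminor_branch_quotient[OF S] by blast
  moreover have "wf_graph T" using wf_graph_branch_quotient[OF S bm T(2)] .
  moreover have "loopless T" using loopless_branch_quotient[OF T(2)] .
  moreover have "verts T = ran \<phi>" using T(2) ran_branch_map[OF bm] by (simp add: branch_quotient_def)
  ultimately show ?thesis using that by blast
qed

lemma obtain_edge_selection:
  assumes "\<forall>x\<in>verts T. \<forall>y\<in>verts T. x \<noteq> y \<longrightarrow> adj_by T Q x y"
  obtains E where "E \<subseteq> {e \<in> edges T. Q e}"
    "\<forall>x\<in>verts T. \<forall>y\<in>verts T. x \<noteq> y \<longrightarrow> card {e \<in> E. ends T e = {x, y}} = 1"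
proof -
  define pick where "pick X = (SOME e. e \<in> edges T \<and> Q e \<and> ends T e = X)" for X
  define E where "E = {e \<in> edges T. Q e \<and> pick (ends T e) = e}"
  have "{e \<in> E. ends T e = {x, y}} = {pick {x, y}}"
    if "x \<in> verts T" "y \<in> verts T" "x \<noteq> y" for x y
  proof -
    have "adj_by T Q x y" using assms that by blast
    then have "\<exists>e. e \<in> edges T \<and> Q e \<and> ends T e = {x, y}" by (auto simp: adj_by_def)
    then have "pick {x, y} \<in> edges T \<and> Q (pick {x, y}) \<and> ends T (pick {x, y}) = {x, y}"
      unfolding pick_def by (rule someI_ex)
    then show ?thesis by (auto simp: E_def)
  qed
  then show ?thesis using that[of E] by (auto simp: E_def)
qed

lemma is_sminor_K_selection:
  assumes "wf_graph T" "loopless T" "\<forall>x\<in>verts T. \<forall>y\<in>verts T. x \<noteq> y \<longrightarrow> adj_by T Q x y"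
  obtains T' where "is_sminor T' T" "is_K T' (card (verts T))" "\<forall>e\<in>edges T'. Q e"
    "sign T' = sign T"
proof -
  obtain E where E: "E \<subseteq> {e \<in> edges T. Q e}"
    "\<forall>x\<in>verts T. \<forall>y\<in>verts T. x \<noteq> y \<longrightarrow> card {e \<in> E. ends T e = {x, y}} = 1"
    using obtain_edge_selection[OF assms(3)] .
  let ?T' = "T\<lparr>edges := E\<rparr>"
  have "is_sminor ?T' T" using assms(1) E(1) by (intro is_sminor_restrict_edges) (auto simp: wf_graph_def)
  moreover have "is_K ?T' (card (verts T))"
    using assms(1,2) E by (auto simp: is_K_def wf_graph_def loopless_def is_loop_def intro: finite_subset)
  ultimately show ?thesis using that[of ?T'] E(1) by auto
qed

definition spans_tildeK :: "('v,'e) sgraph \<Rightarrow> bool" where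
  "spans_tildeK T \<longleftrightarrow> wf_graph T \<and> loopless T \<and> (\<forall>x\<in>verts T. \<forall>y\<in>verts T. x \<noteq> y \<longrightarrow>
     adj_by T (sign T) x y \<and> adj_by T (\<lambda>e. \<not> sign T e) x y)"

lemma is_sminor_tildeK_of_spans:
  assumes "spans_tildeK T"
  obtains T' where "is_sminor T' T" "is_tildeK T' (card (verts T))"
proof -
  have T: "wf_graph T" "loopless T" and pairs:
    "\<forall>x\<in>verts T. \<forall>y\<in>verts T. x \<noteq> y \<longrightarrow> adj_by T (sign T) x y"
    "\<forall>x\<in>verts T. \<forall>y\<in>verts T. x \<noteq> y \<longrightarrow> adj_by T (\<lambda>e. \<not> sign T e) x y"
    using assms by (auto simp: spans_tildeK_def)
  obtain E1 where E1: "E1 \<subseteq> {e \<in> edges T. sign T e}"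
    "\<forall>x\<in>verts T. \<forall>y\<in>verts T. x \<noteq> y \<longrightarrow> card {e \<in> E1. ends T e = {x, y}} = 1"
    using obtain_edge_selection[OF pairs(1)] .
  obtain E2 where E2: "E2 \<subseteq> {e \<in> edges T. \<not> sign T e}"
    "\<forall>x\<in>verts T. \<forall>y\<in>verts T. x \<noteq> y \<longrightarrow> card {e \<in> E2. ends T e = {x, y}} = 1"
    using obtain_edge_selection[OF pairs(2)] .
  let ?T' = "T\<lparr>edges := E1 \<union> E2\<rparr>"
  have "is_sminor ?T' T" using T(1) E1(1) E2(1) by (intro is_sminor_restrict_edges) (auto simp: wf_graph_def)
  moreover have "{e \<in> E1 \<union> E2. ends T e = {x, y} \<and> sign T e} = {e \<in> E1. ends T e = {x, y}}"
    "{e \<in> E1 \<union> E2. ends T e = {x, y} \<and> \<not> sign T e} = {e \<in> E2. ends T e = {x, y}}" for x y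
    using E1(1) E2(1) by auto
  then have "is_tildeK ?T' (card (verts T))"
    using T E1(1,2) E2(1,2)
    by (auto simp: is_tildeK_def wf_graph_def loopless_def is_loop_def intro: finite_subset)
  ultimately show ?thesis using that by blast
qed

lemma is_sminor_negK_of_spans:
  assumes "spans_tildeK T"
  obtains T' where "is_sminor T' T" "is_negK T' (card (verts T))"
proof -
  have "wf_graph T" "loopless T" "\<forall>x\<in>verts T. \<forall>y\<in>verts T. x \<noteq> y \<longrightarrow> adj_by T (\<lambda>e. \<not> sign T e) x y"
    using assms by (auto simp: spans_tildeK_def)
  then obtain T' where "is_sminor T' T" "is_K T' (card (verts T))" "\<forall>e\<in>edges T'. \<not> sign T e"
    "sign T' = sign T"
    by (rule is_sminor_K_selection)
  then show ?thesis using that by (simp add: is_negK_def)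
qed

definition doubly_signed :: "('v,'e) sgraph \<Rightarrow> bool" where
  "doubly_signed S \<longleftrightarrow> (\<forall>e\<in>edges S. (\<exists>f\<in>edges S. ends S f = ends S e \<and> sign S f) \<and>
     (\<exists>f\<in>edges S. ends S f = ends S e \<and> \<not> sign S f))"

lemma spans_tildeK_of_K_minor:
  assumes S: "wf_graph S" "doubly_signed S" and "is_minor H (underlying S)" "is_K H k"
  obtains T where "is_sminor T S" "spans_tildeK T" "card (verts T) = k"
proof -
  obtain \<phi> where "clique_model (underlying S) \<phi> (card (verts H))"
    using clique_model_of_minor assms(3) adj_by_is_K[OF assms(4)] S(1) by (metis wf_graph_underlying)
  then have \<phi>: "clique_model S \<phi> k" using assms(4) by (simp add: clique_model_def is_K_def)
  have parallel: "\<forall>e\<in>edges S. \<exists>f\<in>edges S. ends S f = ends S e \<and> sign S f"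
    using S(2) by (simp add: doubly_signed_def)
  obtain T where T: "is_sminor T S" "branch_quotient S \<phi> T" "wf_graph T" "loopless T" "verts T = ran \<phi>"
    using is_sminor_clique_quotient[OF S(1) \<phi> parallel] .
  have "adj_by T (sign T) x y \<and> adj_by T (\<lambda>e. \<not> sign T e) x y"
    if "x \<in> verts T" "y \<in> verts T" "x \<noteq> y" for x y
  proof -
    have "\<exists>a b. \<phi> a = Some x \<and> \<phi> b = Some y \<and> adj_by S (\<lambda>_. True) a b"
      using \<phi> that T(5) by (simp add: clique_model_def)
    then obtain e a b where e: "e \<in> edges S" "ends S e = {a, b}" "\<phi> a = Some x" "\<phi> b = Some y"
      by (auto simp: adj_by_def)
    then obtain f1 f2 where f: "f1 \<in> edges S" "ends S f1 = {a, b}" "sign S f1"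
      "f2 \<in> edges S" "ends S f2 = {a, b}" "\<not> sign S f2"
      using S(2) by (auto simp: doubly_signed_def)
    note in_T = branch_quotient_edge[OF T(2) _ _ e(3,4) \<open>x \<noteq> y\<close>]
    have "sign T = sign S" using T(2) by (simp add: branch_quotient_def)
    then show ?thesis using in_T[OF f(1,2)] in_T[OF f(4,5)] f(3,6) \<open>x \<noteq> y\<close>
      unfolding adj_by_def by auto
  qed
  then have "spans_tildeK T" using T(3,4) by (simp add: spans_tildeK_def)
  moreover have "card (verts T) = k" using \<phi> T(5) by (simp add: clique_model_def)
  ultimately show ?thesis using that T(1) by blast
qed

section \<open>Balanced partitions\<close>

definition connected_partition :: "('v,'e,'x) mgraph_scheme \<Rightarrow> ('v \<Rightarrow> 'v) \<Rightarrow> bool" where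
  "connected_partition G p \<longleftrightarrow> (\<forall>v\<in>verts G. p v \<in> verts G \<and> p (p v) = p v) \<and>
     (\<forall>r\<in>p ` verts G. connected_on (adj_by G (\<lambda>_. True)) {v \<in> verts G. p v = r})"

definition balanced_partition :: "('v,'e) sgraph \<Rightarrow> ('v \<Rightarrow> 'v) \<Rightarrow> ('v \<Rightarrow> bool) \<Rightarrow> bool" where
  "balanced_partition S p s \<longleftrightarrow> connected_partition S p \<and>
     (\<forall>e\<in>edges S. card (p ` ends S e) = 1 \<longrightarrow> switched S s e)"

definition saturated_partition :: "('v,'e) sgraph \<Rightarrow> ('v \<Rightarrow> 'v) \<Rightarrow> ('v \<Rightarrow> bool) \<Rightarrow> bool" where
  "saturated_partition S p s \<longleftrightarrow> (\<forall>e\<in>edges S. card (p ` ends S e) = 2 \<longrightarrow>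
     (\<exists>f\<in>edges S. p ` ends S f = p ` ends S e \<and> switched S s f) \<and>
     (\<exists>f\<in>edges S. p ` ends S f = p ` ends S e \<and> \<not> switched S s f))"

lemma balanced_partition_discrete:
  assumes "\<not> neg_loop S"
  shows "balanced_partition S (\<lambda>v. v) (\<lambda>_. True)"
proof -
  have "{v \<in> verts S. v = r} = {r}" if "r \<in> verts S" for r using that by auto
  then show ?thesis using assms
    by (auto simp: balanced_partition_def connected_partition_def neg_loop_def is_loop_def
        switched_def connected_on_singleton)
qed

lemma connected_partition_merge:
  assumes wf: "wf_graph G" and cp: "connected_partition G p"
    and e: "e \<in> edges G" "ends G e = {a, b}" "p a \<noteq> p b"
  shows "connected_partition G (\<lambda>v. if p v = p b then p a else p v)"
    and "card ((\<lambda>v. if p v = p b then p a else p v) ` verts G) < card (p ` verts G)"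
proof -
  let ?p = "\<lambda>v. if p v = p b then p a else p v"
  have ab: "a \<in> verts G" "b \<in> verts G" using ends_subset_verts[OF wf e(1)] e(2) by auto
  have reps: "\<And>v. v \<in> verts G \<Longrightarrow> p v \<in> verts G \<and> p (p v) = p v"
    and conn: "\<And>r. r \<in> p ` verts G \<Longrightarrow> connected_on (adj_by G (\<lambda>_. True)) {v \<in> verts G. p v = r}"
    using cp by (auto simp: connected_partition_def)
  have img: "?p ` verts G = p ` verts G - {p b}"
    using ab e(3) by (auto simp: image_iff)
  have "connected_on (adj_by G (\<lambda>_. True)) {v \<in> verts G. ?p v = r}" if "r \<in> ?p ` verts G" for r
  proof (cases "r = p a")
    case True
    have adj: "adj_by G (\<lambda>_. True) a b" using e by (auto simp: adj_by_def)
    have "connected_on (adj_by G (\<lambda>_. True)) ({v \<in> verts G. p v = p a} \<union> {v \<in> verts G. p v = p b})"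
      by (rule connected_on_Un[OF conn conn _ _ adj symp_adj_by]) (use ab in auto)
    moreover have "{v \<in> verts G. ?p v = r} = {v \<in> verts G. p v = p a} \<union> {v \<in> verts G. p v = p b}"
      using True e(3) by auto
    ultimately show ?thesis by simp
  next
    case False
    then have "{v \<in> verts G. ?p v = r} = {v \<in> verts G. p v = r}" "r \<in> p ` verts G"
      using that img by auto
    then show ?thesis using conn by simp
  qed
  moreover have "\<forall>v\<in>verts G. ?p v \<in> verts G \<and> ?p (?p v) = ?p v" using reps ab e(3) by auto
  ultimately show "connected_partition G ?p" by (simp add: connected_partition_def)
  show "card (?p ` verts G) < card (p ` verts G)"
    unfolding img using wf ab by (intro card_Diff1_less) (auto simp: wf_graph_def)
qed

lemma switched_flip:
  assumes "ends S f = {x, y}"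
  shows "switched S (\<lambda>v. if P v then \<not> s v else s v) f \<longleftrightarrow> (switched S s f \<longleftrightarrow> (P x \<longleftrightarrow> P y))"
  using assms by (auto simp: switched_doubleton)

text \<open>If two adjacent parts are joined only by edges of one kind, switch one of them when that kind
  is negative and merge them.\<close>
lemma balanced_partition_merge:
  assumes wf: "wf_graph S" and bp: "balanced_partition S p s" and ns: "\<not> saturated_partition S p s"
  obtains p' s' where "balanced_partition S p' s'" "card (p' ` verts S) < card (p ` verts S)"
proof -
  obtain e where e: "e \<in> edges S" "card (p ` ends S e) = 2"
    and uniform: "\<And>f. f \<in> edges S \<Longrightarrow> p ` ends S f = p ` ends S e \<Longrightarrow> switched S s f = switched S s e"
    using ns unfolding saturated_partition_def by metis
  obtain a b where ab: "ends S e = {a, b}" using obtain_ends[OF wf e(1)] .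
  have ij: "p a \<noteq> p b" using e(2) ab by auto
  define p' where "p' = (\<lambda>v. if p v = p b then p a else p v)"
  define s' where "s' v = (if p v = p b \<and> \<not> switched S s e then \<not> s v else s v)" for v
  have merge: "connected_partition S p'" "card (p' ` verts S) < card (p ` verts S)"
    unfolding p'_def using connected_partition_merge[OF wf _ e(1) ab ij] bp
    by (simp_all add: balanced_partition_def)
  have "switched S s' f" if f: "f \<in> edges S" "card (p' ` ends S f) = 1" for f
  proof -
    obtain x y where xy: "ends S f = {x, y}" using obtain_ends[OF wf f(1)] .
    have flip: "switched S s' f \<longleftrightarrow> (switched S s f \<longleftrightarrow>
        (p x = p b \<and> \<not> switched S s e \<longleftrightarrow> p y = p b \<and> \<not> switched S s e))"
      unfolding s'_def using switched_flip[OF xy] .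
    show ?thesis
    proof (cases "p x = p y")
      case True
      then show ?thesis using bp f(1) xy flip by (simp add: balanced_partition_def)
    next
      case False
      then have "p' x = p' y" using f(2) xy by (auto simp: card_insert_if split: if_splits)
      then have "{p x, p y} = {p a, p b}" using False by (auto simp: p'_def split: if_splits)
      then have "switched S s f = switched S s e" using uniform[OF f(1)] xy ab by simp
      then show ?thesis using flip \<open>{p x, p y} = {p a, p b}\<close> ij by (auto simp: doubleton_eq_iff)
    qed
  qed
  then show ?thesis using that merge by (auto simp: balanced_partition_def)
qed

lemma obtain_saturated_partition:
  assumes "wf_graph S" "\<not> neg_loop S"
  obtains p s where "balanced_partition S p s" "saturated_partition S p s"
proof -
  have "\<exists>p s. balanced_partition S p s \<and> saturated_partition S p s"
    if "balanced_partition S p s" "card (p ` verts S) = n" for n p s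
    using that
  proof (induction n arbitrary: p s rule: less_induct)
    case (less n)
    show ?case
    proof (cases "saturated_partition S p s")
      case False
      then obtain p' s' where "balanced_partition S p' s'" "card (p' ` verts S) < n"
        using balanced_partition_merge[OF assms(1) less.prems(1)] less.prems(2) by metis
      then show ?thesis using less.IH by blast
    qed (use less.prems in blast)
  qed
  then show ?thesis using balanced_partition_discrete[OF assms(2)] that by blast
qed

definition partition_quotient :: "('v,'e) sgraph \<Rightarrow> ('v \<Rightarrow> 'v) \<Rightarrow> ('v,'e,'x) mgraph_scheme \<Rightarrow> bool" where
  "partition_quotient S p H \<longleftrightarrow> verts H = p ` verts S \<and>
     (\<forall>e\<in>edges S. card (p ` ends S e) = 2 \<longrightarrow> e \<in> edges H \<and> ends H e = p ` ends S e)"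

lemma branch_map_partition:
  assumes "connected_partition G p" "\<forall>e\<in>edges G. card (p ` ends G e) = 1 \<longrightarrow> P e"
  shows "branch_map G P (\<lambda>v. if v \<in> verts G then Some (p v) else None)" (is "branch_map G P ?\<rho>")
proof -
  have reps: "\<And>v. v \<in> verts G \<Longrightarrow> p v \<in> verts G \<and> p (p v) = p v"
    and conn: "\<And>r. r \<in> p ` verts G \<Longrightarrow> connected_on (adj_by G (\<lambda>_. True)) {v \<in> verts G. p v = r}"
    using assms(1) by (auto simp: connected_partition_def)
  have "connected_on (adj_by G P) {v. ?\<rho> v = Some r}" if "?\<rho> r = Some r" for r
  proof -
    have "r \<in> verts G" "p r = r" using that by (auto split: if_splits)
    then have r: "r \<in> p ` verts G" by (metis imageI)
    have "connected_on (adj_by G P) {v \<in> verts G. p v = r}"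
    proof (rule connected_on_mono[OF conn[OF r]])
      fix x y assume "x \<in> {v \<in> verts G. p v = r}" "y \<in> {v \<in> verts G. p v = r}" "adj_by G (\<lambda>_. True) x y"
      then show "adj_by G P x y" using assms(2) by (auto simp: adj_by_def)
    qed
    moreover have "{v. ?\<rho> v = Some r} = {v \<in> verts G. p v = r}" by auto
    ultimately show ?thesis by simp
  qed
  then show ?thesis using reps by (auto simp: branch_map_def)
qed

lemma partition_quotient_branch_quotient:
  assumes wf: "wf_graph S" and cp: "connected_partition S p"
    and T: "branch_quotient S (\<lambda>v. if v \<in> verts S then Some (p v) else None) T"
  shows "partition_quotient S p T" "edges T = {e \<in> edges S. card (p ` ends S e) = 2}"
proof -
  let ?\<rho> = "\<lambda>v. if v \<in> verts S then Some (p v) else None"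
  have "ends S e \<subseteq> dom ?\<rho> \<and> (the \<circ> ?\<rho>) ` ends S e = p ` ends S e" if "e \<in> edges S" for e
    using ends_subset_verts[OF wf that] by (auto simp: dom_def intro!: image_cong)
  then have E: "edges T = {e \<in> edges S. card (p ` ends S e) = 2}"
    and N: "\<forall>e\<in>edges T. ends T e = p ` ends S e" using T by (auto simp: branch_quotient_def)
  then show "edges T = {e \<in> edges S. card (p ` ends S e) = 2}" by blast
  have "{r. ?\<rho> r = Some r} = p ` verts S"
  proof
    show "{r. ?\<rho> r = Some r} \<subseteq> p ` verts S"
    proof
      fix r assume "r \<in> {r. ?\<rho> r = Some r}"
      then have "r = p r" "r \<in> verts S" by (auto split: if_splits)
      then show "r \<in> p ` verts S" by (rule image_eqI)
    qed
    show "p ` verts S \<subseteq> {r. ?\<rho> r = Some r}" using cp by (auto simp: connected_partition_def)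
  qed
  then have "verts T = p ` verts S" using T by (simp add: branch_quotient_def)
  then show "partition_quotient S p T" using E N by (simp add: partition_quotient_def)
qed

text \<open>Switch by s and contract the parts: inner edges become positive and are absorbed, while by
  saturation every pair of adjacent parts ends up joined by edges of both signs.\<close>
lemma is_sminor_saturated_quotient:
  assumes wf: "wf_graph S" and bp: "balanced_partition S p s" and sat: "saturated_partition S p s"
  obtains S1 where "is_sminor S1 S" "wf_graph S1" "loopless S1" "doubly_signed S1"
    "partition_quotient S p S1"
proof -
  obtain \<sigma> where Ss: "is_sminor (S\<lparr>sign := \<sigma>\<rparr>) S" and \<sigma>: "\<forall>e\<in>edges S. \<sigma> e = switched S s e"
    using is_sminor_switch[OF wf] .
  let ?Ss = "S\<lparr>sign := \<sigma>\<rparr>" and ?\<rho> = "\<lambda>v. if v \<in> verts S then Some (p v) else None"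
  have wf': "wf_graph ?Ss" and cp: "connected_partition ?Ss p"
    using wf bp by (simp_all add: wf_graph_def balanced_partition_def connected_partition_def)
  have "branch_map ?Ss (sign ?Ss) ?\<rho>"
    using branch_map_partition[OF cp] bp \<sigma> by (simp add: balanced_partition_def)
  note bm = this
  obtain S1 where S1: "is_sminor S1 ?Ss" "branch_quotient ?Ss ?\<rho> S1"
    using is_sminor_branch_quotient[OF wf' bm] .
  have wf1: "wf_graph S1" using wf_graph_branch_quotient[OF wf' bm S1(2)] .
  have pq: "partition_quotient S p S1" and E1: "edges S1 = {e \<in> edges S. card (p ` ends S e) = 2}"
    using partition_quotient_branch_quotient[OF wf' cp] S1(2) by (simp_all add: partition_quotient_def)
  have sign1: "sign S1 = \<sigma>" using S1(2) by (simp add: branch_quotient_def)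
  have "doubly_signed S1"
    unfolding doubly_signed_def
  proof
    fix e assume "e \<in> edges S1"
    then have e: "e \<in> edges S" "card (p ` ends S e) = 2" using E1 by auto
    then obtain f1 f2 where f: "f1 \<in> edges S" "p ` ends S f1 = p ` ends S e" "switched S s f1"
      "f2 \<in> edges S" "p ` ends S f2 = p ` ends S e" "\<not> switched S s f2"
      using sat by (auto simp: saturated_partition_def)
    have "f \<in> edges S1 \<and> ends S1 f = ends S1 e" if "f \<in> edges S" "p ` ends S f = p ` ends S e" for f
      using pq e that by (simp add: partition_quotient_def)
    then show "(\<exists>f\<in>edges S1. ends S1 f = ends S1 e \<and> sign S1 f) \<and>
        (\<exists>f\<in>edges S1. ends S1 f = ends S1 e \<and> \<not> sign S1 f)"
      using f sign1 \<sigma> by metis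
  qed
  moreover have "is_sminor S1 S" using S1(1) Ss by (rule is_sminor_trans)
  ultimately show ?thesis using that wf1 pq loopless_branch_quotient[OF S1(2)] by blast
qed

lemma balanced_colorable_partition:
  assumes wf: "wf_graph S" and bp: "balanced_partition S p s" and pq: "partition_quotient S p H"
    and "colorable H k"
  shows "balanced_colorable S k"
proof -
  obtain c where c: "\<forall>v\<in>verts H. c v < k"
    "\<forall>e\<in>edges H. \<forall>u\<in>ends H e. \<forall>w\<in>ends H e. u \<noteq> w \<longrightarrow> c u \<noteq> c w"
    using assms(4) by (auto simp: colorable_def)
  have "balanced_set S {v \<in> verts S. c (p v) = i}" for i
  proof (rule balanced_setI_switching[of _ _ s], intro ballI impI)
    fix e assume e: "e \<in> edges S" and sub: "ends S e \<subseteq> {v \<in> verts S. c (p v) = i}"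
    obtain a b where ab: "ends S e = {a, b}" using obtain_ends[OF wf e] .
    have "p a = p b"
    proof (rule ccontr)
      assume "p a \<noteq> p b"
      then have "e \<in> edges H" "ends H e = {p a, p b}" using pq e ab by (auto simp: partition_quotient_def)
      then show False using c(2) sub ab \<open>p a \<noteq> p b\<close> by auto
    qed
    then show "switched S s e" using bp e ab by (auto simp: balanced_partition_def)
  qed
  moreover have "c (p v) < k" if "v \<in> verts S" for v using c(1) pq that by (auto simp: partition_quotient_def)
  ultimately show ?thesis unfolding balanced_colorable_def by (intro exI[of _ "c \<circ> p"]) auto
qed

text \<open>In (G,-) an edge inside a part is negative, so after switching its ends differ in s:
  pairing the colour of the part with s gives a proper colouring.\<close>
lemma colorable_neg_partition:
  assumes wf: "wf_graph G" and bp: "balanced_partition (neg_of G) p s"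
    and pq: "partition_quotient (neg_of G) p H" and "colorable H k"
  shows "colorable G (2 * k)"
proof -
  obtain c where c: "\<forall>v\<in>verts H. c v < k"
    "\<forall>e\<in>edges H. \<forall>u\<in>ends H e. \<forall>w\<in>ends H e. u \<noteq> w \<longrightarrow> c u \<noteq> c w"
    using assms(4) by (auto simp: colorable_def)
  define c' where "c' v = 2 * c (p v) + (if s v then 1 else 0)" for v
  have "c' v < 2 * k" if "v \<in> verts G" for v
    using c(1) pq that by (auto simp: partition_quotient_def c'_def)
  moreover have "c' u \<noteq> c' w" if e: "e \<in> edges G" "u \<in> ends G e" "w \<in> ends G e" "u \<noteq> w" for e u w
  proof -
    have uw: "ends G e = {u, w}" using ends_eq_doubleton[OF wf e] .
    show ?thesis
    proof (cases "p u = p w")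
      case True
      then have "switched (neg_of G) s e" using bp e(1) uw by (auto simp: balanced_partition_def)
      then have "s u \<noteq> s w" using uw by (simp add: switched_doubleton)
      then show ?thesis using True by (auto simp: c'_def)
    next
      case False
      then have "e \<in> edges H" "ends H e = {p u, p w}" using pq e(1) uw by (auto simp: partition_quotient_def)
      then have "c (p u) \<noteq> c (p w)" using c(2) False by blast
      then show ?thesis unfolding c'_def by (cases "s u"; cases "s w"; simp; presburger)
    qed
  qed
  ultimately show ?thesis unfolding colorable_def by blast
qed

lemma obtain_lifting_quotient:
  assumes "wf_graph S" "\<not> neg_loop S"
  obtains p s and H :: "('v,'e) mgraph"
  where "wf_graph H" "loopless H" "balanced_partition S p s" "partition_quotient S p H"
    "\<forall>H' k. is_minor H' H \<and> is_K H' k \<longrightarrow> (\<exists>T. is_sminor T S \<and> spans_tildeK T \<and> card (verts T) = k)"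
proof -
  obtain p s where ps: "balanced_partition S p s" "saturated_partition S p s"
    using obtain_saturated_partition[OF assms] .
  obtain S1 where S1: "is_sminor S1 S" "wf_graph S1" "loopless S1" "doubly_signed S1"
    "partition_quotient S p S1"
    using is_sminor_saturated_quotient[OF assms(1) ps] .
  have "\<exists>T. is_sminor T S \<and> spans_tildeK T \<and> card (verts T) = k"
    if H': "is_minor H' (underlying S1)" "is_K H' k" for H' k
  proof -
    obtain T where "is_sminor T S1" "spans_tildeK T" "card (verts T) = k"
      using spans_tildeK_of_K_minor[OF S1(2,4) H'] .
    then show ?thesis using is_sminor_trans S1(1) by blast
  qed
  moreover have "wf_graph (underlying S1)" "loopless (underlying S1)"
    "partition_quotient S p (underlying S1)"
    using S1(2,3,5) by (simp_all add: partition_quotient_def loopless_def is_loop_def)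
  ultimately show ?thesis using that ps(1) by blast
qed

lemma colorable_card_verts:
  assumes "wf_graph G"
  shows "colorable G (card (verts G))"
proof -
  have "finite (verts G)" using assms by (simp add: wf_graph_def)
  then obtain h where h: "bij_betw h (verts G) {0..<card (verts G)}"
    using ex_bij_betw_finite_nat by blast
  then have "\<forall>v\<in>verts G. h v < card (verts G)" "inj_on h (verts G)" by (auto simp: bij_betw_def)
  then show ?thesis using ends_subset_verts[OF assms]
    unfolding colorable_def inj_on_def by (intro exI[of _ h]) (meson subsetD)
qed

lemma colorable_chi: "wf_graph G \<Longrightarrow> colorable G (chi G)"
  unfolding chi_def by (rule LeastI) (rule colorable_card_verts)

lemma chi_le: "colorable G k \<Longrightarrow> chi G \<le> k"
  unfolding chi_def by (rule Least_le)

lemma chi_b_le: "balanced_colorable S k \<Longrightarrow> chi_b S \<le> k"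
  unfolding chi_b_def by (rule Least_le)

text \<open>An edge e of G becomes the positive edge 2e and the negative edge 2e+1.\<close>
definition tilde :: "('v, nat) mgraph \<Rightarrow> ('v, nat) sgraph" where
  "tilde G = \<lparr>verts = verts G, edges = {n. n div 2 \<in> edges G}, ends = (\<lambda>n. ends G (n div 2)), sign = even\<rparr>"

lemma tilde_simps [simp]:
  "verts (tilde G) = verts G" "edges (tilde G) = {n. n div 2 \<in> edges G}"
  "ends (tilde G) = (\<lambda>n. ends G (n div 2))" "sign (tilde G) = even"
  by (simp_all add: tilde_def)

lemma wf_graph_tilde: "wf_graph G \<Longrightarrow> wf_graph (tilde G)"
proof -
  have "{n. n div 2 \<in> E} \<subseteq> (\<lambda>n. 2 * n) ` E \<union> (\<lambda>n. 2 * n + 1) ` E" for E :: "nat set"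
  proof
    fix n assume "n \<in> {n. n div 2 \<in> E}"
    then show "n \<in> (\<lambda>n. 2 * n) ` E \<union> (\<lambda>n. 2 * n + 1) ` E"
      by (cases "even n") (auto intro: image_eqI[of n _ "n div 2"])
  qed
  then show "wf_graph G \<Longrightarrow> wf_graph (tilde G)"
    by (auto simp: wf_graph_def intro: finite_subset)
qed

lemma not_neg_loop_tilde: "loopless G \<Longrightarrow> \<not> neg_loop (tilde G)"
  by (simp add: neg_loop_def loopless_def is_loop_def)

lemma clique_model_tilde [simp]: "clique_model (tilde G) \<phi> k = clique_model G \<phi> k"
proof -
  have "adj_by (tilde G) (\<lambda>_. True) = adj_by G (\<lambda>_. True)"
    by (auto simp: adj_by_def fun_eq_iff) (metis div_mult_self1_is_m zero_less_numeral)
  then show ?thesis by (simp add: clique_model_def branch_map_def)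
qed

text \<open>Every edge of G yields a negative 2-cycle in tilde G.\<close>
lemma balanced_set_tilde:
  assumes "wf_graph G" "loopless G"
  shows "balanced_set (tilde G) X \<longleftrightarrow> (\<forall>e\<in>edges G. \<not> ends G e \<subseteq> X)"
proof
  assume bal: "balanced_set (tilde G) X"
  show "\<forall>e\<in>edges G. \<not> ends G e \<subseteq> X"
  proof (intro ballI notI)
    fix e assume e: "e \<in> edges G" "ends G e \<subseteq> X"
    obtain u w where uw: "ends G e = {u, w}" using obtain_ends[OF assms(1) e(1)] .
    have "u \<noteq> w" using assms(2) e(1) uw by (auto simp: loopless_def is_loop_def)
    moreover have "\<forall>i<length [2 * e, 2 * e + 1].
        ends (tilde G) ([2 * e, 2 * e + 1] ! i) = {[u, w] ! i, [u, w] ! ((i + 1) mod length [u, w])}"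
    proof (intro allI impI)
      fix i assume "i < length [2 * e, 2 * e + 1]"
      then consider "i = 0" | "i = 1" by fastforce
      then show "ends (tilde G) ([2 * e, 2 * e + 1] ! i) = {[u, w] ! i, [u, w] ! ((i + 1) mod length [u, w])}"
        by cases (simp_all add: uw insert_commute)
    qed
    ultimately have "negative_cycle (tilde G) [u, w] [2 * e, 2 * e + 1]"
      using e(1) by (simp add: negative_cycle_def is_cycle_def)
    then show False using bal e(2) uw by (auto simp: balanced_set_def)
  qed
next
  assume "\<forall>e\<in>edges G. \<not> ends G e \<subseteq> X"
  then show "balanced_set (tilde G) X" by (intro balanced_setI_switching) auto
qed

lemma chi_b_tilde:
  assumes "wf_graph G" "loopless G"
  shows "chi_b (tilde G) = chi G"
proof -
  have proper: "(\<forall>u\<in>ends G e. \<forall>w\<in>ends G e. u \<noteq> w \<longrightarrow> c u \<noteq> c w)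
      \<longleftrightarrow> (\<forall>i. \<not> ends G e \<subseteq> {v \<in> verts G. c v = i})" if e: "e \<in> edges G" for c :: "'a \<Rightarrow> nat" and e
  proof -
    obtain u w where uw: "ends G e = {u, w}" using obtain_ends[OF assms(1) e] .
    moreover have "u \<noteq> w" using assms(2) e uw by (auto simp: loopless_def is_loop_def)
    ultimately show ?thesis using ends_subset_verts[OF assms(1) e] by auto
  qed
  have "balanced_colorable (tilde G) k \<longleftrightarrow> colorable G k" for k
  proof
    assume "balanced_colorable (tilde G) k"
    then obtain c where c: "\<forall>v\<in>verts G. c v < k"
      "\<forall>i<k. \<forall>e\<in>edges G. \<not> ends G e \<subseteq> {v \<in> verts G. c v = i}"
      by (auto simp: balanced_colorable_def balanced_set_tilde[OF assms])
    have "\<not> ends G e \<subseteq> {v \<in> verts G. c v = i}" if "e \<in> edges G" for e i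
    proof
      assume sub: "ends G e \<subseteq> {v \<in> verts G. c v = i}"
      obtain u w where "ends G e = {u, w}" using obtain_ends[OF assms(1) \<open>e \<in> edges G\<close>] .
      then have "i < k" using sub c(1) by auto
      then show False using c(2) that sub by blast
    qed
    then show "colorable G k" using c(1) proper by (auto simp: colorable_def)
  next
    assume "colorable G k"
    then obtain c where "\<forall>v\<in>verts G. c v < k"
      "\<forall>e\<in>edges G. \<forall>u\<in>ends G e. \<forall>w\<in>ends G e. u \<noteq> w \<longrightarrow> c u \<noteq> c w"
      by (auto simp: colorable_def)
    then show "balanced_colorable (tilde G) k"
      using proper by (auto simp: balanced_colorable_def balanced_set_tilde[OF assms])
  qed
  then show ?thesis by (simp add: chi_b_def chi_def)
qed

lemma minor_step_verts: "minor_step H G \<Longrightarrow> verts H \<subseteq> verts G"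
  by (induction rule: minor_step.induct) auto

lemma is_minor_verts: "is_minor H G \<Longrightarrow> verts H \<subseteq> verts G"
  unfolding is_minor_def
  by (induction rule: converse_rtranclp_induct) (auto dest: minor_step_verts)

text \<open>The edge i * t + j joins i and j for i < j < t.\<close>
definition complete_graph :: "nat \<Rightarrow> graph" where
  "complete_graph t = \<lparr>verts = {0..<t}, edges = {e. e < t * t \<and> e div t < e mod t},
     ends = (\<lambda>e. {e div t, e mod t})\<rparr>"

lemma wf_graph_complete_graph: "wf_graph (complete_graph t)"
  and loopless_complete_graph: "loopless (complete_graph t)"
proof -
  have "e div t < t \<and> e mod t < t" if "e < t * t" for e
    using that by (cases t) (auto simp: less_mult_imp_div_less)
  then show "wf_graph (complete_graph t)" "loopless (complete_graph t)"
    by (auto simp: wf_graph_def loopless_def is_loop_def complete_graph_def card_insert_if)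
qed

lemma chi_complete_graph: "t \<le> chi (complete_graph t)"
proof -
  have "t \<le> k" if col: "colorable (complete_graph t) k" for k
  proof -
    obtain c where c: "\<forall>v\<in>verts (complete_graph t). c v < k"
      "\<forall>e\<in>edges (complete_graph t). \<forall>u\<in>ends (complete_graph t) e. \<forall>w\<in>ends (complete_graph t) e.
         u \<noteq> w \<longrightarrow> c u \<noteq> c w"
      using col unfolding colorable_def by blast
    have distinct: "c i \<noteq> c j" if ij: "i < j" "j < t" for i j
    proof -
      have "i * t + j < Suc i * t" using ij by simp
      also have "\<dots> \<le> t * t" using ij by (intro mult_le_mono1) simp
      finally have "i * t + j < t * t" .
      moreover have "(i * t + j) div t = i" "(i * t + j) mod t = j" using ij by auto
      ultimately show ?thesis using c(2) ij by (auto simp: complete_graph_def)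
    qed
    have "inj_on c {0..<t}"
    proof (rule inj_onI)
      fix i j assume "i \<in> {0..<t}" "j \<in> {0..<t}" "c i = c j"
      then show "i = j" using distinct[of i j] distinct[of j i] by (cases i j rule: linorder_cases) auto
    qed
    moreover have "c ` {0..<t} \<subseteq> {0..<k}" using c(1) by (auto simp: complete_graph_def)
    ultimately show ?thesis using card_inj_on_le[of c "{0..<t}" "{0..<k}"] by simp
  qed
  then show ?thesis using colorable_chi[OF wf_graph_complete_graph] by blast
qed

definition K_minor_forced :: "nat \<Rightarrow> nat \<Rightarrow> bool" where
  "K_minor_forced t k \<longleftrightarrow> (\<forall>G :: graph. wf_graph G \<and> loopless G \<and> chi G \<ge> t \<longrightarrow>
     (\<exists>H. is_minor H G \<and> is_K H k))"

definition tildeK_sminor_forced :: "nat \<Rightarrow> nat \<Rightarrow> bool" where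
  "tildeK_sminor_forced t k \<longleftrightarrow> (\<forall>G :: sgraph_nat. wf_graph G \<and> \<not> neg_loop G \<and> chi_b G \<ge> t \<longrightarrow>
     (\<exists>H. is_sminor H G \<and> is_tildeK H k))"

definition negK_sminor_forced :: "nat \<Rightarrow> nat \<Rightarrow> bool" where
  "negK_sminor_forced t k \<longleftrightarrow> (\<forall>G :: graph. wf_graph G \<and> loopless G \<and> chi G \<ge> t \<longrightarrow>
     (\<exists>H. is_sminor H (neg_of G) \<and> is_negK H k))"

lemma M_eq_Greatest: "M t = Greatest (K_minor_forced t)"
  unfolding M_def K_minor_forced_def ..

lemma SM_eq_Greatest: "SM t = Greatest (tildeK_sminor_forced t)"
  unfolding SM_def tildeK_sminor_forced_def ..

lemma OM_eq_Greatest: "OM t = Greatest (negK_sminor_forced t)"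
  unfolding OM_def negK_sminor_forced_def ..

lemma K_minor_forced_le: "K_minor_forced t k \<Longrightarrow> k \<le> t"
proof -
  assume "K_minor_forced t k"
  then have "\<exists>H. is_minor H (complete_graph t) \<and> is_K H k"
    using wf_graph_complete_graph loopless_complete_graph chi_complete_graph
    by (simp add: K_minor_forced_def)
  then obtain H where "is_minor H (complete_graph t)" "is_K H k" by blast
  then have "verts H \<subseteq> {0..<t}" "card (verts H) = k"
    using is_minor_verts by (fastforce simp: complete_graph_def is_K_def)+
  then show "k \<le> t" using card_mono[of "{0..<t}" "verts H"] by simp
qed

lemma negK_sminor_forced_0: "negK_sminor_forced t 0"
  unfolding negK_sminor_forced_def
proof (intro allI impI)
  fix G :: graph assume "wf_graph G \<and> loopless G \<and> t \<le> chi G"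
  then have G: "wf_graph G" and wf: "wf_graph (neg_of G)" by simp_all
  let ?T = "(neg_of G)\<lparr>verts := verts G - verts G, edges := {e \<in> edges G. ends G e \<inter> verts G = {}}\<rparr>"
  have "is_sminor ?T (neg_of G)"
    using is_sminor_delete_vertices[of "verts G" "neg_of G"] wf by (simp add: wf_graph_def)
  moreover have "ends G e \<inter> verts G \<noteq> {}" if "e \<in> edges G" for e
  proof -
    have "ends G e \<noteq> {}" using card_ends[OF G that] by (cases "ends G e = {}") auto
    then show ?thesis using ends_subset_verts[OF G that] by blast
  qed
  then have no_edges: "{e \<in> edges G. ends G e \<inter> verts G = {}} = {}" by blast
  have "is_negK ?T 0" unfolding no_edges by (simp add: is_negK_def is_K_def wf_graph_def loopless_def)
  ultimately show "\<exists>H. is_sminor H (neg_of G) \<and> is_negK H 0" by blast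
qed

lemma negK_forced_imp_K_forced: "negK_sminor_forced t k \<Longrightarrow> K_minor_forced t k"
  unfolding negK_sminor_forced_def K_minor_forced_def is_negK_def
  using is_sminor_underlying is_K_underlying underlying_neg_of by metis

lemma K_minor_of_clique_model:
  assumes G: "wf_graph G" and \<phi>: "clique_model G \<phi> k"
  obtains H where "is_minor H G" "is_K H k"
proof -
  obtain T where T: "is_sminor T (pos_of G)" "branch_quotient (pos_of G) \<phi> T" "wf_graph T"
    "loopless T" "verts T = ran \<phi>"
    using is_sminor_clique_quotient[of "pos_of G" \<phi> k] G \<phi> by auto
  have "adj_by T (\<lambda>_. True) x y" if xy: "x \<in> verts T" "y \<in> verts T" "x \<noteq> y" for x y
  proof -
    have "\<exists>a b. \<phi> a = Some x \<and> \<phi> b = Some y \<and> adj_by G (\<lambda>_. True) a b"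
      using \<phi> xy T(5) by (simp add: clique_model_def)
    then obtain a b e where ab: "\<phi> a = Some x" "\<phi> b = Some y" "e \<in> edges G" "ends G e = {a, b}"
      by (auto simp: adj_by_def)
    then have "e \<in> edges T" "ends T e = {x, y}"
      using branch_quotient_edge[OF T(2) _ _ ab(1,2) \<open>x \<noteq> y\<close>] by simp_all
    then show ?thesis using \<open>x \<noteq> y\<close> unfolding adj_by_def by blast
  qed
  then obtain T' where "is_sminor T' T" "is_K T' (card (verts T))"
    using is_sminor_K_selection[OF T(3,4)] by blast
  moreover have "card (verts T) = k" using \<phi> T(5) by (simp add: clique_model_def)
  ultimately have "is_minor (underlying T') G" "is_K (underlying T') k"
    using is_sminor_underlying[OF is_sminor_trans[OF _ T(1)]] by simp_all
  then show ?thesis using that by blast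
qed

lemma tildeK_forced_imp_K_forced:
  assumes "tildeK_sminor_forced t k"
  shows "K_minor_forced t k"
  unfolding K_minor_forced_def
proof (intro allI impI)
  fix G :: graph assume G: "wf_graph G \<and> loopless G \<and> t \<le> chi G"
  then have "wf_graph (tilde G)" "\<not> neg_loop (tilde G)" "t \<le> chi_b (tilde G)"
    using wf_graph_tilde not_neg_loop_tilde chi_b_tilde[of G] by auto
  then obtain T where T: "is_sminor T (tilde G)" "is_tildeK T k"
    using assms by (auto simp: tildeK_sminor_forced_def)
  have "wf_graph (underlying (tilde G))" using wf_graph_tilde[of G] G by simp
  then obtain \<phi> where "clique_model (underlying (tilde G)) \<phi> (card (verts (underlying T)))"
    by (rule clique_model_of_minor[OF _ is_sminor_underlying[OF T(1)]])
      (use adj_by_is_tildeK[OF T(2)] in simp)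
  then have "clique_model G \<phi> k" using T(2) by (simp add: is_tildeK_def)
  then show "\<exists>H. is_minor H G \<and> is_K H k" using K_minor_of_clique_model G by blast
qed

lemma K_forced_imp_tildeK_forced:
  assumes "K_minor_forced t k"
  shows "tildeK_sminor_forced t k"
  unfolding tildeK_sminor_forced_def
proof (intro allI impI)
  fix S :: sgraph_nat assume S: "wf_graph S \<and> \<not> neg_loop S \<and> t \<le> chi_b S"
  then obtain p s and H :: graph where H: "wf_graph H" "loopless H" "balanced_partition S p s"
    "partition_quotient S p H"
    "\<forall>H' k. is_minor H' H \<and> is_K H' k \<longrightarrow> (\<exists>T. is_sminor T S \<and> spans_tildeK T \<and> card (verts T) = k)"
    using obtain_lifting_quotient by metis
  have "chi_b S \<le> chi H"
    using balanced_colorable_partition[OF _ H(3,4) colorable_chi[OF H(1)]] S by (intro chi_b_le) simp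
  then obtain H' where "is_minor H' H" "is_K H' k"
    using assms H(1,2) S by (auto simp: K_minor_forced_def)
  then obtain T where "is_sminor T S" "spans_tildeK T" "card (verts T) = k" using H(5) by blast
  then show "\<exists>T. is_sminor T S \<and> is_tildeK T k"
    by (metis is_sminor_tildeK_of_spans is_sminor_trans)
qed

lemma K_forced_imp_negK_forced:
  assumes "K_minor_forced t k"
  shows "negK_sminor_forced (2 * t) k"
  unfolding negK_sminor_forced_def
proof (intro allI impI)
  fix G :: graph assume G: "wf_graph G \<and> loopless G \<and> 2 * t \<le> chi G"
  then have "wf_graph (neg_of G)" "\<not> neg_loop (neg_of G)"
    by (auto simp: neg_loop_def loopless_def is_loop_def)
  then obtain p s and H :: graph where H: "wf_graph H" "loopless H" "balanced_partition (neg_of G) p s"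
    "partition_quotient (neg_of G) p H"
    "\<forall>H' k. is_minor H' H \<and> is_K H' k \<longrightarrow>
       (\<exists>T. is_sminor T (neg_of G) \<and> spans_tildeK T \<and> card (verts T) = k)"
    using obtain_lifting_quotient by metis
  have "chi G \<le> 2 * chi H"
    using colorable_neg_partition[OF _ H(3,4) colorable_chi[OF H(1)]] G by (intro chi_le) simp
  then obtain H' where "is_minor H' H" "is_K H' k"
    using assms H(1,2) G by (auto simp: K_minor_forced_def)
  then obtain T where "is_sminor T (neg_of G)" "spans_tildeK T" "card (verts T) = k" using H(5) by blast
  then show "\<exists>T. is_sminor T (neg_of G) \<and> is_negK T k"
    by (metis is_sminor_negK_of_spans is_sminor_trans)
qed

lemma Greatest_le_Greatest_nat:
  fixes P Q :: "nat \<Rightarrow> bool"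
  assumes "P k" "\<And>k. P k \<Longrightarrow> Q k" "\<And>k. Q k \<Longrightarrow> k \<le> b"
  shows "Greatest P \<le> Greatest Q"
proof -
  have "P (Greatest P)" using assms by (metis GreatestI_nat)
  then show ?thesis using assms by (metis Greatest_le_nat)
qed

theorem theorem3p2:
  fixes t :: nat
  assumes "0 < t"
  shows "M t = SM t \<and> OM t \<le> M t \<and> M t \<le> OM (2 * t)"
proof (intro conjI)
  have "K_minor_forced t = tildeK_sminor_forced t"
    using K_forced_imp_tildeK_forced tildeK_forced_imp_K_forced by blast
  then show "M t = SM t" unfolding M_eq_Greatest SM_eq_Greatest by simp
  show "OM t \<le> M t" unfolding OM_eq_Greatest M_eq_Greatest
    using negK_sminor_forced_0 negK_forced_imp_K_forced K_minor_forced_le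
    by (rule Greatest_le_Greatest_nat)
  show "M t \<le> OM (2 * t)" unfolding OM_eq_Greatest M_eq_Greatest
    using negK_forced_imp_K_forced[OF negK_sminor_forced_0] K_forced_imp_negK_forced
      negK_forced_imp_K_forced[THEN K_minor_forced_le]
    by (rule Greatest_le_Greatest_nat) simp
qed

end
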